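(* Let $(\Omega,P,\pi)$ be a finite irreducible reversible Markov chain (in continuous time), let $A\subset\Omega$ be nonempty, put $\epsilon:=\pi(A)$, and let $t\ge1$. Set $r:=(t+|\log\epsilon|)t_{\mathrm{rel}}$, $\ell:=t_{\mathrm{rel}}\log2$ and $s:=2\epsilon^{-1}t_{\mathrm{rel}}\log2$. Then there exists $J\subset\Omega$ such that: (i) $\pi(J)\ge1-\frac34e^{-2t}$; (ii) $\mathbb E_z[T_A]\le r+\frac{11}{2}(s+\ell)$ for every $z\in J$; (iii) $\mathrm P_z[T_A\le r+i(\ell+s)]\ge(1-2^{-i})^2$ for every $z\in J$ and every integer $i\ge1$.
   Context: Continuous-time chain with heat kernel $H_t(x,y)=\sum_{k\ge0}e^{-t}\frac{t^k}{k!}P^k(x,y)$; reversible means $\pi(x)P(x,y)=\pi(y)P(y,x)$. $\mathrm P_z,\mathbb E_z$: probability/expectation for the chain started at $z$. $T_A:=\inf\{t\ge0:X_t\in A\}$. $t_{\mathrm{rel}}:=(1-\lambda_2)^{-1}$, $\lambda_2$ the second largest eigenvalue of $P$. *)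

theory Defs
  imports "HOL-Analysis.Analysis"
begin

definition stochastic :: "('a::finite \<Rightarrow> 'a \<Rightarrow> real) \<Rightarrow> bool" where
  "stochastic P \<longleftrightarrow> (\<forall>x y. P x y \<ge> 0) \<and> (\<forall>x. (\<Sum>y\<in>UNIV. P x y) = 1)"

fun mpow :: "('a::finite \<Rightarrow> 'a \<Rightarrow> real) \<Rightarrow> nat \<Rightarrow> 'a \<Rightarrow> 'a \<Rightarrow> real" where
  "mpow P 0 x y = (if x = y then 1 else 0)"
| "mpow P (Suc n) x y = (\<Sum>z\<in>UNIV. P x z * mpow P n z y)"

definition irreducible_chain :: "('a::finite \<Rightarrow> 'a \<Rightarrow> real) \<Rightarrow> bool" where
  "irreducible_chain P \<longleftrightarrow> (\<forall>x y. \<exists>n. mpow P n x y > 0)"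

definition reversible :: "('a::finite \<Rightarrow> 'a \<Rightarrow> real) \<Rightarrow> ('a \<Rightarrow> real) \<Rightarrow> bool" where
  "reversible P \<pi> \<longleftrightarrow> (\<forall>x y. \<pi> x * P x y = \<pi> y * P y x)"

definition eigenvalue :: "('a::finite \<Rightarrow> 'a \<Rightarrow> real) \<Rightarrow> real \<Rightarrow> bool" where
  "eigenvalue P mu \<longleftrightarrow> (\<exists>v::'a \<Rightarrow> real. v \<noteq> (\<lambda>_. 0) \<and> (\<forall>x. (\<Sum>y\<in>UNIV. P x y * v y) = mu * v x))"

text \<open>Second largest eigenvalue (for an irreducible chain the eigenvalue 1 is simple,
  so this is the largest eigenvalue different from 1) and relaxation time.\<close>
definition lambda2 :: "('a::finite \<Rightarrow> 'a \<Rightarrow> real) \<Rightarrow> real" where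
  "lambda2 P = Max {mu. eigenvalue P mu \<and> mu \<noteq> 1}"

definition t_rel :: "('a::finite \<Rightarrow> 'a \<Rightarrow> real) \<Rightarrow> real" where
  "t_rel P = 1 / (1 - lambda2 P)"

text \<open>Discrete-time hitting probability: probability, started at z, that the
  jump chain visits A within its first k steps (steps 0..k).\<close>
fun hit_prob :: "('a::finite \<Rightarrow> 'a \<Rightarrow> real) \<Rightarrow> 'a set \<Rightarrow> nat \<Rightarrow> 'a \<Rightarrow> real" where
  "hit_prob P A 0 z = (if z \<in> A then 1 else 0)"
| "hit_prob P A (Suc k) z = (if z \<in> A then 1 else (\<Sum>y\<in>UNIV. P z y * hit_prob P A k y))"

text \<open>Continuous-time chain (rate-1 Poissonisation, as in the heat kernel
  H_t = sum_k e^{-t} t^k/k! P^k): P_z[T_A <= t].\<close>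
definition cont_hit_prob :: "('a::finite \<Rightarrow> 'a \<Rightarrow> real) \<Rightarrow> 'a set \<Rightarrow> 'a \<Rightarrow> real \<Rightarrow> real" where
  "cont_hit_prob P A z t =
     (if t < 0 then 0 else (\<Sum>k. exp (- t) * t ^ k / fact k * hit_prob P A k z))"

text \<open>E_z[T_A] = integral over [0,oo) of P_z[T_A > t] dt (tail formula).\<close>
definition exp_hit_time :: "('a::finite \<Rightarrow> 'a \<Rightarrow> real) \<Rightarrow> 'a set \<Rightarrow> 'a \<Rightarrow> ennreal" where
  "exp_hit_time P A z = (\<integral>\<^sup>+ t. indicator {0..} t * ennreal (1 - cont_hit_prob P A z t) \<partial>lborel)"

end

theory Submission
  imports Defs
begin

text \<open>
  The survival function \<open>cont_survival u z\<close> = P_z[T_A > u] is the heat semigroup of the chain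
  killed on A applied to the indicator of -A.  A function vanishing on A has Rayleigh quotient at
  most 1 - gap * eps (Poincare inequality for its centred part, Cauchy-Schwarz against the
  indicator of -A for its mean), so the L2(pi) norm of \<open>cont_survival v\<close> is at most
  exp (- v * gap * eps), which is at most 4^(-k) for v = k (l + s).  By the Markov property
  \<open>cont_survival (r + v) \<le> heat P r (cont_survival v)\<close>, which is the mean of \<open>cont_survival v\<close>
  (at most 4^(-k)) plus the heat flow of a mean-zero function, whose norm is contracted by
  exp (- r * gap) \<le> exp (- t).  Chebyshev's inequality for the sum over k of 4^k times these
  squared deviations yields a set J with pi(J) \<ge> 1 - exp (- 2 t) / 3 on which the k-th deviation
  is at most 2^(-k).  So P_z[T_A > r + k (l + s)] \<le> 4^(-k) + 2^(-k) for z in J, which is (iii),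
  and integrating this geometric tail gives (ii).

  The contraction estimates go through the lazy chain: it is positive semidefinite, so its
  Rayleigh bound bounds its norm, and its semigroup at time 2u is that of the original chain at
  time u (Poisson thinning).
\<close>

section \<open>Poisson weights\<close>

definition poisson_weight :: "real \<Rightarrow> nat \<Rightarrow> real" where
  "poisson_weight u k = exp (- u) * u ^ k / fact k"

lemma poisson_weight_nonneg: "u \<ge> 0 \<Longrightarrow> poisson_weight u k \<ge> 0"
  by (simp add: poisson_weight_def)

lemma sums_poisson_weight_power:
  "(\<lambda>k. poisson_weight u k * c ^ k) sums exp (- u * (1 - c))"
proof -
  have "(\<lambda>k. exp (- u) * ((u * c) ^ k /\<^sub>R fact k)) sums (exp (- u) * exp (u * c))"
    by (intro sums_mult exp_converges)
  then show ?thesis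
    by (simp add: poisson_weight_def power_mult_distrib divide_inverse mult_ac
        mult_exp_exp algebra_simps)
qed

lemma sums_poisson_weight: "poisson_weight u sums 1"
  using sums_poisson_weight_power[of u 1] by simp

lemma summable_poisson_weight: "summable (poisson_weight u)"
  using sums_poisson_weight sums_summable by blast

lemma suminf_poisson_weight: "(\<Sum>k. poisson_weight u k) = 1"
  using sums_poisson_weight sums_unique by fastforce

lemma summable_norm_poisson_weight_mult:
  assumes "u \<ge> 0" and "\<And>k. \<bar>a k\<bar> \<le> B"
  shows "summable (\<lambda>k. norm (poisson_weight u k * a k))"
proof (rule summable_comparison_test)
  show "\<exists>N. \<forall>k\<ge>N. norm (norm (poisson_weight u k * a k)) \<le> poisson_weight u k * B"
    using assms poisson_weight_nonneg[OF assms(1)] by (auto simp: abs_mult intro!: mult_left_mono)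
  show "summable (\<lambda>k. poisson_weight u k * B)"
    using summable_poisson_weight summable_mult2 by blast
qed

lemma summable_poisson_weight_mult:
  assumes "u \<ge> 0" and "\<And>k. \<bar>a k\<bar> \<le> B"
  shows "summable (\<lambda>k. poisson_weight u k * a k)"
  using summable_norm_poisson_weight_mult[OF assms] by (rule summable_norm_cancel)

lemma abs_suminf_poisson_weight_mult_le:
  assumes u: "u \<ge> 0" and a: "\<And>k. \<bar>a k\<bar> \<le> B"
  shows "\<bar>\<Sum>k. poisson_weight u k * a k\<bar> \<le> B"
proof -
  have "\<bar>\<Sum>k. poisson_weight u k * a k\<bar> \<le> (\<Sum>k. norm (poisson_weight u k * a k))"
    using summable_norm[OF summable_norm_poisson_weight_mult[OF u a]] by simp
  also have "\<dots> \<le> (\<Sum>k. poisson_weight u k * B)"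
    using a poisson_weight_nonneg[OF u]
    by (intro suminf_le summable_norm_poisson_weight_mult[OF u a] summable_mult2
        summable_poisson_weight) (simp add: abs_mult mult_left_mono)
  also have "\<dots> = B"
    by (simp add: suminf_mult2[symmetric, OF summable_poisson_weight] suminf_poisson_weight)
  finally show ?thesis .
qed

lemma poisson_weight_add:
  "poisson_weight (a + b) n = (\<Sum>j\<le>n. poisson_weight a j * poisson_weight b (n - j))"
proof -
  have "poisson_weight (a + b) n =
      (\<Sum>j\<le>n. exp (- a) * exp (- b) * (real (n choose j) * a ^ j * b ^ (n - j)) / fact n)"
    by (simp add: poisson_weight_def binomial_ring sum_distrib_left sum_divide_distrib
        exp_add[symmetric])
  also have "\<dots> = (\<Sum>j\<le>n. poisson_weight a j * poisson_weight b (n - j))"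
    by (intro sum.cong refl) (simp add: binomial_fact poisson_weight_def divide_simps)
  finally show ?thesis .
qed

lemma poisson_weight_double_binomial:
  assumes "j \<le> k"
  shows "poisson_weight (2 * u) k * (real (k choose j) / 2 ^ k) =
    poisson_weight u j * poisson_weight u (k - j)"
proof -
  have "(2 * u) ^ k = 2 ^ k * (u ^ j * u ^ (k - j))"
    using assms by (simp add: power_add[symmetric] power_mult_distrib)
  then show ?thesis
    using assms by (simp add: binomial_fact poisson_weight_def exp_add[symmetric] divide_simps)
qed

lemma poisson_weight_Cauchy_product_sums:
  assumes "a \<ge> 0" "b \<ge> 0" "\<And>j. \<bar>c j\<bar> \<le> C" "\<And>m. \<bar>d m\<bar> \<le> D"
  shows "(\<lambda>n. \<Sum>j\<le>n. poisson_weight a j * poisson_weight b (n - j) * (c j * d (n - j)))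
    sums ((\<Sum>j. poisson_weight a j * c j) * (\<Sum>m. poisson_weight b m * d m))"
proof -
  have "(\<lambda>n. \<Sum>j\<le>n. (poisson_weight a j * c j) * (poisson_weight b (n - j) * d (n - j)))
      sums ((\<Sum>j. poisson_weight a j * c j) * (\<Sum>m. poisson_weight b m * d m))"
    by (intro Cauchy_product_sums summable_norm_poisson_weight_mult) (use assms in auto)
  then show ?thesis by (simp add: mult_ac)
qed

text \<open>The Poisson law of parameter \<open>a + b\<close> is the convolution of those of \<open>a\<close> and \<open>b\<close>.\<close>
lemma suminf_poisson_weight_add_le:
  fixes x :: "nat \<Rightarrow> real" and c d :: "'b \<Rightarrow> nat \<Rightarrow> real"
  assumes a: "a \<ge> 0" and b: "b \<ge> 0"
    and x: "\<And>n. \<bar>x n\<bar> \<le> B" and c: "\<And>y j. \<bar>c y j\<bar> \<le> C" and d: "\<And>y m. \<bar>d y m\<bar> \<le> D"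
    and split: "\<And>j m. x (j + m) \<le> (\<Sum>y\<in>Y. c y j * d y m)"
  shows "(\<Sum>n. poisson_weight (a + b) n * x n) \<le>
    (\<Sum>y\<in>Y. (\<Sum>j. poisson_weight a j * c y j) * (\<Sum>m. poisson_weight b m * d y m))"
proof (rule sums_le)
  show "(\<lambda>n. poisson_weight (a + b) n * x n) sums (\<Sum>n. poisson_weight (a + b) n * x n)"
    using a b x by (intro summable_sums summable_poisson_weight_mult) auto
  show "(\<lambda>n. \<Sum>y\<in>Y. \<Sum>j\<le>n. poisson_weight a j * poisson_weight b (n - j) * (c y j * d y (n - j)))
      sums (\<Sum>y\<in>Y. (\<Sum>j. poisson_weight a j * c y j) * (\<Sum>m. poisson_weight b m * d y m))"
    using a b c d by (intro sums_sum poisson_weight_Cauchy_product_sums) auto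
  fix n
  have "poisson_weight a j * poisson_weight b (n - j) * x n \<le>
      poisson_weight a j * poisson_weight b (n - j) * (\<Sum>y\<in>Y. c y j * d y (n - j))" if "j \<le> n" for j
    using split[of j "n - j"] that poisson_weight_nonneg[OF a] poisson_weight_nonneg[OF b]
    by (intro mult_left_mono) simp_all
  then show "poisson_weight (a + b) n * x n \<le>
      (\<Sum>y\<in>Y. \<Sum>j\<le>n. poisson_weight a j * poisson_weight b (n - j) * (c y j * d y (n - j)))"
    unfolding poisson_weight_add sum_distrib_right
    by (subst sum.swap) (intro sum_mono, simp add: sum_distrib_left mult_ac)
qed

text \<open>Poisson thinning: a Poisson(\<open>2 u\<close>) number of fair coin tosses has a Poisson(\<open>u\<close>)
  number of heads.\<close>
lemma suminf_poisson_weight_thinning: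
  assumes u: "u \<ge> 0" and a: "\<And>k. \<bar>a k\<bar> \<le> B"
  shows "(\<Sum>k. poisson_weight u k * a k) =
    (\<Sum>k. poisson_weight (2 * u) k * ((\<Sum>j\<le>k. real (k choose j) * a j) / 2 ^ k))"
proof -
  have "(\<lambda>k. \<Sum>j\<le>k. poisson_weight u j * poisson_weight u (k - j) * (a j * 1))
      sums ((\<Sum>k. poisson_weight u k * a k) * (\<Sum>k. poisson_weight u k * 1))"
    using u a by (intro poisson_weight_Cauchy_product_sums[where D = 1]) auto
  moreover have "(\<Sum>j\<le>k. poisson_weight u j * poisson_weight u (k - j) * (a j * 1)) =
      poisson_weight (2 * u) k * ((\<Sum>j\<le>k. real (k choose j) * a j) / 2 ^ k)" for k
    unfolding sum_divide_distrib sum_distrib_left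
    by (intro sum.cong refl) (simp add: poisson_weight_double_binomial[symmetric])
  ultimately show ?thesis
    by (simp add: suminf_poisson_weight sums_iff)
qed

section \<open>Kernels acting on functions\<close>

definition act :: "('a::finite \<Rightarrow> 'a \<Rightarrow> real) \<Rightarrow> ('a \<Rightarrow> real) \<Rightarrow> 'a \<Rightarrow> real" where
  "act T f x = (\<Sum>y\<in>UNIV. T x y * f y)"

definition substochastic :: "('a::finite \<Rightarrow> 'a \<Rightarrow> real) \<Rightarrow> bool" where
  "substochastic T \<longleftrightarrow> (\<forall>x y. T x y \<ge> 0) \<and> (\<forall>x. (\<Sum>y\<in>UNIV. T x y) \<le> 1)"

definition lazy :: "('a::finite \<Rightarrow> 'a \<Rightarrow> real) \<Rightarrow> 'a \<Rightarrow> 'a \<Rightarrow> real" where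
  "lazy T x y = (of_bool (x = y) + T x y) / 2"

definition heat :: "('a::finite \<Rightarrow> 'a \<Rightarrow> real) \<Rightarrow> real \<Rightarrow> ('a \<Rightarrow> real) \<Rightarrow> 'a \<Rightarrow> real" where
  "heat T u f x = (\<Sum>k. poisson_weight u k * (act T ^^ k) f x)"

lemma act_add: "act T (\<lambda>x. f x + g x) = (\<lambda>x. act T f x + act T g x)"
  by (auto simp: act_def algebra_simps sum.distrib)

lemma act_diff: "act T (\<lambda>x. f x - g x) = (\<lambda>x. act T f x - act T g x)"
  by (auto simp: act_def algebra_simps sum_subtractf)

lemma act_scale: "act T (\<lambda>x. c * f x) = (\<lambda>x. c * act T f x)"
  by (auto simp: act_def algebra_simps sum_distrib_left)

lemma act_add_scale: "act T (\<lambda>x. f x + c * g x) = (\<lambda>x. act T f x + c * act T g x)"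
  by (simp add: act_add act_scale)

lemma act_sum: "act T (\<lambda>x. \<Sum>j\<in>J. f j x) = (\<lambda>x. \<Sum>j\<in>J. act T (f j) x)"
  by (auto simp: act_def sum_distrib_left intro!: sum.swap)

lemma act_mono:
  assumes "\<forall>x y. T x y \<ge> 0" and "\<And>y. f y \<le> g y"
  shows "act T f x \<le> act T g x"
  unfolding act_def using assms by (intro sum_mono mult_left_mono) auto

lemma act_mono_kernel:
  assumes "\<And>x y. T x y \<le> T' x y" and "\<And>y. f y \<ge> 0"
  shows "act T f x \<le> act T' f x"
  unfolding act_def using assms by (intro sum_mono mult_right_mono) auto

lemma funpow_act_nonneg:
  assumes "\<forall>x y. T x y \<ge> 0" and "\<And>y. f y \<ge> 0"
  shows "(act T ^^ k) f x \<ge> 0"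
  using assms(2) by (induction k arbitrary: x)
    (auto simp: act_def assms(1) intro!: sum_nonneg mult_nonneg_nonneg)

lemma funpow_act_mpow: "(act P ^^ j) f x = (\<Sum>y\<in>UNIV. mpow P j x y * f y)"
proof (induction j arbitrary: x)
  case 0
  show ?case by (simp add: mult_if_delta)
next
  case (Suc j)
  have "(act P ^^ Suc j) f x = (\<Sum>w\<in>UNIV. \<Sum>y\<in>UNIV. P x w * mpow P j w y * f y)"
    by (simp add: act_def Suc sum_distrib_left mult.assoc)
  also have "\<dots> = (\<Sum>y\<in>UNIV. \<Sum>w\<in>UNIV. P x w * mpow P j w y * f y)"
    by (rule sum.swap)
  finally show ?case
    by (simp add: sum_distrib_right)
qed

lemma abs_act_le:
  assumes "substochastic T" and "\<And>x. \<bar>f x\<bar> \<le> B"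
  shows "\<bar>act T f x\<bar> \<le> B"
proof -
  have "\<bar>act T f x\<bar> \<le> (\<Sum>y\<in>UNIV. T x y * B)"
    unfolding act_def using assms
    by (intro order_trans[OF sum_abs] sum_mono)
      (auto simp: substochastic_def abs_mult intro!: mult_left_mono)
  also have "\<dots> \<le> 1 * B"
    unfolding sum_distrib_right[symmetric] using assms order_trans[OF abs_ge_zero assms(2)]
    by (intro mult_right_mono) (auto simp: substochastic_def)
  finally show ?thesis by simp
qed

lemma abs_funpow_act_le:
  assumes "substochastic T" and "\<And>x. \<bar>f x\<bar> \<le> B"
  shows "\<bar>(act T ^^ k) f x\<bar> \<le> B"
  by (induction k arbitrary: x) (simp_all add: assms abs_act_le)

lemma finite_fun_abs_bounded: "\<exists>B. \<forall>x. \<bar>(f :: 'a::finite \<Rightarrow> real) x\<bar> \<le> B"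
  by (rule exI[of _ "\<Sum>x\<in>UNIV. \<bar>f x\<bar>"]) (auto intro: member_le_sum)

lemma stochastic_imp_substochastic: "stochastic P \<Longrightarrow> substochastic P"
  by (simp add: stochastic_def substochastic_def)

lemma act_const: "stochastic P \<Longrightarrow> act P (\<lambda>_. c) = (\<lambda>_. c)"
  by (auto simp: act_def stochastic_def sum_distrib_right[symmetric])

lemma act_lazy: "act (lazy T) f x = (f x + act T f x) / 2"
  by (simp add: act_def lazy_def add_divide_distrib distrib_right sum.distrib
      sum_divide_distrib[symmetric] of_bool_def mult_if_delta)

lemma substochastic_lazy:
  assumes "substochastic T"
  shows "substochastic (lazy T)"
  unfolding substochastic_def
proof (intro conjI allI)
  fix x y
  show "lazy T x y \<ge> 0"
    using assms by (simp add: lazy_def substochastic_def)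
  have "(\<Sum>y\<in>UNIV. lazy T x y) = (1 + (\<Sum>y\<in>UNIV. T x y)) / 2"
    by (simp add: lazy_def add_divide_distrib sum.distrib sum_divide_distrib[symmetric])
  also have "\<dots> \<le> 1"
    using assms by (simp add: substochastic_def)
  finally show "(\<Sum>y\<in>UNIV. lazy T x y) \<le> 1" .
qed

lemma stochastic_lazy:
  assumes "stochastic P"
  shows "stochastic (lazy P)"
proof -
  have "(\<Sum>y\<in>UNIV. lazy P x y) = (1 + (\<Sum>y\<in>UNIV. P x y)) / 2" for x
    by (simp add: lazy_def add_divide_distrib sum.distrib sum_divide_distrib[symmetric])
  then show ?thesis
    using assms by (simp add: stochastic_def lazy_def)
qed

lemma sum_binomial_Suc:
  fixes a :: "nat \<Rightarrow> real"
  shows "(\<Sum>j\<le>Suc k. real (Suc k choose j) * a j) =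
    (\<Sum>j\<le>k. real (k choose j) * a j) + (\<Sum>j\<le>k. real (k choose j) * a (Suc j))"
proof -
  have "(\<Sum>j\<le>Suc k. real (Suc k choose j) * a j) =
      a 0 + (\<Sum>j\<le>k. real (k choose Suc j) * a (Suc j)) + (\<Sum>j\<le>k. real (k choose j) * a (Suc j))"
    by (subst sum.atMost_Suc_shift) (simp add: sum.distrib algebra_simps)
  also have "a 0 + (\<Sum>j\<le>k. real (k choose Suc j) * a (Suc j)) = (\<Sum>j\<le>Suc k. real (k choose j) * a j)"
    by (subst sum.atMost_Suc_shift) simp
  finally show ?thesis by simp
qed

lemma funpow_act_lazy:
  "2 ^ k * (act (lazy T) ^^ k) f x = (\<Sum>j\<le>k. real (k choose j) * (act T ^^ j) f x)"
proof (induction k arbitrary: x)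
  case (Suc k)
  have IH: "(\<lambda>x. 2 ^ k * (act (lazy T) ^^ k) f x) =
      (\<lambda>x. \<Sum>j\<le>k. real (k choose j) * (act T ^^ j) f x)"
    using Suc by (rule ext)
  have "2 ^ Suc k * (act (lazy T) ^^ Suc k) f x =
      2 ^ k * (act (lazy T) ^^ k) f x + act T (\<lambda>x. 2 ^ k * (act (lazy T) ^^ k) f x) x"
    by (simp add: act_lazy act_scale algebra_simps)
  also have "\<dots> = (\<Sum>j\<le>k. real (k choose j) * (act T ^^ j) f x) +
      (\<Sum>j\<le>k. real (k choose j) * (act T ^^ Suc j) f x)"
    unfolding IH act_sum act_scale Suc by simp
  also have "\<dots> = (\<Sum>j\<le>Suc k. real (Suc k choose j) * (act T ^^ j) f x)"
    by (rule sum_binomial_Suc[of k "\<lambda>j. (act T ^^ j) f x", symmetric])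
  finally show ?case .
qed simp

lemma heat_lazy:
  assumes "substochastic T" and "u \<ge> 0"
  shows "heat T u f = heat (lazy T) (2 * u) f"
proof
  fix x
  obtain B where B: "\<forall>x. \<bar>f x\<bar> \<le> B" using finite_fun_abs_bounded by blast
  have lazy_eq: "(act (lazy T) ^^ k) f x = (\<Sum>j\<le>k. real (k choose j) * (act T ^^ j) f x) / 2 ^ k"
    for k
    using funpow_act_lazy[of k T f x] by (simp add: field_simps)
  show "heat T u f x = heat (lazy T) (2 * u) f x"
    unfolding heat_def lazy_eq
    by (rule suminf_poisson_weight_thinning[OF assms(2)])
      (use abs_funpow_act_le[OF assms(1)] B in blast)
qed

lemma mpow_nonneg: "stochastic P \<Longrightarrow> mpow P n x y \<ge> 0"
  by (induction n arbitrary: x) (auto simp: stochastic_def intro!: sum_nonneg)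

lemma mpow_le_1:
  assumes "stochastic P"
  shows "mpow P j x y \<le> 1"
proof -
  have "(act P ^^ j) (\<lambda>_. 1) = (\<lambda>_. 1)"
    by (induction j) (simp_all add: act_const[OF assms])
  moreover have "(\<Sum>y\<in>UNIV. mpow P j x y) = (act P ^^ j) (\<lambda>_. 1) x"
    by (simp add: funpow_act_mpow)
  ultimately have "(\<Sum>y\<in>UNIV. mpow P j x y) = 1"
    by simp
  moreover have "mpow P j x y \<le> (\<Sum>y\<in>UNIV. mpow P j x y)"
    by (rule member_le_sum) (simp_all add: mpow_nonneg[OF assms])
  ultimately show ?thesis by simp
qed

lemma heat_eq_sum_mpow:
  assumes "stochastic P" and "a \<ge> 0"
  shows "heat P a h z = (\<Sum>y\<in>UNIV. (\<Sum>j. poisson_weight a j * mpow P j z y) * h y)"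
proof -
  have summable: "summable (\<lambda>j. poisson_weight a j * mpow P j z y)" for y
    using mpow_nonneg[OF assms(1)] mpow_le_1[OF assms(1)]
    by (intro summable_poisson_weight_mult[OF assms(2), of _ 1]) simp
  have "heat P a h z = (\<Sum>j. \<Sum>y\<in>UNIV. poisson_weight a j * mpow P j z y * h y)"
    by (simp add: heat_def funpow_act_mpow sum_distrib_left mult.assoc)
  also have "\<dots> = (\<Sum>y\<in>UNIV. \<Sum>j. poisson_weight a j * mpow P j z y * h y)"
    using summable by (intro suminf_sum summable_mult2) auto
  also have "\<dots> = (\<Sum>y\<in>UNIV. (\<Sum>j. poisson_weight a j * mpow P j z y) * h y)"
    using summable by (simp add: suminf_mult2)
  finally show ?thesis .
qed

lemma heat_add_const:
  assumes "stochastic P" and "a \<ge> 0"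
  shows "heat P a (\<lambda>x. h x + c) z = heat P a h z + c"
proof -
  obtain B where B: "\<forall>x. \<bar>h x\<bar> \<le> B"
    using finite_fun_abs_bounded by blast
  have "(act P ^^ k) (\<lambda>x. h x + c) = (\<lambda>x. (act P ^^ k) h x + c)" for k
    by (induction k) (simp_all add: act_add act_const[OF assms(1)])
  then have "heat P a (\<lambda>x. h x + c) z =
      (\<Sum>k. poisson_weight a k * (act P ^^ k) h z + poisson_weight a k * c)"
    by (simp add: heat_def distrib_left)
  also have "\<dots> = heat P a h z + (\<Sum>k. poisson_weight a k * c)"
    unfolding heat_def using B abs_funpow_act_le[OF stochastic_imp_substochastic[OF assms(1)]]
    by (intro suminf_add[symmetric] summable_poisson_weight_mult[OF assms(2), of _ B]
        summable_mult2[OF summable_poisson_weight]) blast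
  also have "(\<Sum>k. poisson_weight a k * c) = c"
    by (simp add: suminf_mult2[symmetric, OF summable_poisson_weight] suminf_poisson_weight)
  finally show ?thesis .
qed

section \<open>The weighted space \<open>L\<^sup>2(\<pi>)\<close>\<close>

definition l2_inner :: "('a::finite \<Rightarrow> real) \<Rightarrow> ('a \<Rightarrow> real) \<Rightarrow> ('a \<Rightarrow> real) \<Rightarrow> real" where
  "l2_inner \<pi> f g = (\<Sum>x\<in>UNIV. \<pi> x * f x * g x)"

text \<open>The isometry \<open>L\<^sup>2(\<pi>) \<rightarrow> \<real>\<^sup>n\<close>, which lets the norm inherit Cauchy--Schwarz, the
  triangle inequality for series and compactness of spheres.\<close>
definition l2_embed :: "('a::finite \<Rightarrow> real) \<Rightarrow> ('a \<Rightarrow> real) \<Rightarrow> real ^ 'a" where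
  "l2_embed \<pi> f = (\<chi> x. sqrt (\<pi> x) * f x)"

definition l2_norm :: "('a::finite \<Rightarrow> real) \<Rightarrow> ('a \<Rightarrow> real) \<Rightarrow> real" where
  "l2_norm \<pi> f = norm (l2_embed \<pi> f)"

lemma l2_norm_nonneg: "l2_norm \<pi> f \<ge> 0"
  by (simp add: l2_norm_def)

lemma l2_inner_commute: "l2_inner \<pi> f g = l2_inner \<pi> g f"
  by (simp add: l2_inner_def mult_ac)

lemma l2_inner_add_scale_left:
  "l2_inner \<pi> (\<lambda>x. f x + c * g x) h = l2_inner \<pi> f h + c * l2_inner \<pi> g h"
  by (simp add: l2_inner_def algebra_simps sum.distrib sum_distrib_left)

lemma l2_inner_add_scale_right:
  "l2_inner \<pi> h (\<lambda>x. f x + c * g x) = l2_inner \<pi> h f + c * l2_inner \<pi> h g"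
  by (simp add: l2_inner_def algebra_simps sum.distrib sum_distrib_left)

lemma l2_inner_scale_left: "l2_inner \<pi> (\<lambda>x. c * f x) g = c * l2_inner \<pi> f g"
  by (simp add: l2_inner_def sum_distrib_left mult_ac)

lemma l2_inner_scale_right: "l2_inner \<pi> f (\<lambda>x. c * g x) = c * l2_inner \<pi> f g"
  by (simp add: l2_inner_def sum_distrib_left mult_ac)

lemma l2_inner_act_reversible:
  assumes "reversible T \<pi>"
  shows "l2_inner \<pi> (act T f) g = l2_inner \<pi> f (act T g)"
proof -
  have "l2_inner \<pi> (act T f) g = (\<Sum>x\<in>UNIV. \<Sum>y\<in>UNIV. (\<pi> x * T x y) * f y * g x)"
    by (simp add: l2_inner_def act_def sum_distrib_left sum_distrib_right mult_ac)
  also have "\<dots> = (\<Sum>x\<in>UNIV. \<Sum>y\<in>UNIV. (\<pi> y * T y x) * f y * g x)"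
    using assms by (simp add: reversible_def)
  also have "\<dots> = l2_inner \<pi> f (act T g)"
    by (subst sum.swap) (simp add: l2_inner_def act_def sum_distrib_left mult_ac)
  finally show ?thesis .
qed

definition mean :: "('a::finite \<Rightarrow> real) \<Rightarrow> ('a \<Rightarrow> real) \<Rightarrow> real" where
  "mean \<pi> f = (\<Sum>x\<in>UNIV. \<pi> x * f x)"

lemma mean_add_scale: "mean \<pi> (\<lambda>x. f x + c * g x) = mean \<pi> f + c * mean \<pi> g"
  by (simp add: mean_def algebra_simps sum.distrib sum_distrib_left)

lemma mean_const: "mean \<pi> (\<lambda>_. c) = c * (\<Sum>x\<in>UNIV. \<pi> x)"
  by (simp add: mean_def sum_distrib_left mult.commute)

lemma mean_diff_const: "mean \<pi> (\<lambda>x. f x - c) = mean \<pi> f - c * (\<Sum>x\<in>UNIV. \<pi> x)"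
  by (simp add: mean_def right_diff_distrib sum_subtractf sum_distrib_left mult.commute)

lemma l2_inner_diff_const:
  "l2_inner \<pi> (\<lambda>x. f x - m) (\<lambda>x. g x - m) =
    l2_inner \<pi> f g - m * mean \<pi> f - m * mean \<pi> g + m\<^sup>2 * (\<Sum>x\<in>UNIV. \<pi> x)"
  by (simp add: l2_inner_def mean_def algebra_simps power2_eq_square sum.distrib sum_subtractf
      sum_distrib_left)

lemma mean_act:
  assumes "stochastic P" and "reversible P \<pi>"
  shows "mean \<pi> (act P f) = mean \<pi> f"
proof -
  have "mean \<pi> (act P f) = (\<Sum>y\<in>UNIV. (\<Sum>x\<in>UNIV. \<pi> y * P y x) * f y)"
    unfolding mean_def act_def sum_distrib_left sum_distrib_right
    by (subst sum.swap) (use assms(2) in \<open>simp add: reversible_def mult_ac\<close>)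
  then show ?thesis
    using assms(1) by (simp add: mean_def stochastic_def sum_distrib_left[symmetric])
qed

context
  fixes \<pi> :: "'a::finite \<Rightarrow> real"
  assumes weight_nonneg: "\<forall>x. \<pi> x \<ge> 0"
begin

lemma inner_l2_embed: "inner (l2_embed \<pi> f) (l2_embed \<pi> g) = l2_inner \<pi> f g"
  using weight_nonneg
  by (simp add: inner_vec_def l2_embed_def l2_inner_def mult_ac real_sqrt_mult[symmetric])

lemma l2_norm_power2: "(l2_norm \<pi> f)\<^sup>2 = l2_inner \<pi> f f"
  using inner_l2_embed by (simp add: l2_norm_def power2_norm_eq_inner)

lemma l2_inner_self_nonneg: "l2_inner \<pi> f f \<ge> 0"
  using l2_norm_power2 by (metis zero_le_power2)

lemma abs_l2_inner_le: "\<bar>l2_inner \<pi> f g\<bar> \<le> l2_norm \<pi> f * l2_norm \<pi> g"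
  using Cauchy_Schwarz_ineq2[of "l2_embed \<pi> f" "l2_embed \<pi> g"]
  by (simp add: inner_l2_embed l2_norm_def)

lemma weight_mult_power2_le_l2_norm: "\<pi> z * (f z)\<^sup>2 \<le> (l2_norm \<pi> f)\<^sup>2"
proof -
  have "\<pi> z * (f z)\<^sup>2 = (\<Sum>x\<in>{z}. \<pi> x * f x * f x)"
    by (simp add: power2_eq_square mult_ac)
  also have "\<dots> \<le> (\<Sum>x\<in>UNIV. \<pi> x * f x * f x)"
    using weight_nonneg by (intro sum_mono2) (auto simp: mult.assoc)
  finally show ?thesis
    by (simp add: l2_norm_power2 l2_inner_def)
qed

lemma l2_norm_suminf_le:
  fixes g :: "nat \<Rightarrow> 'a \<Rightarrow> real"
  assumes summable: "\<And>x. summable (\<lambda>k. c k * g k x)"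
    and bound: "\<And>k. \<bar>c k\<bar> * l2_norm \<pi> (g k) \<le> b k" and "summable b"
  shows "l2_norm \<pi> (\<lambda>x. \<Sum>k. c k * g k x) \<le> (\<Sum>k. b k)"
proof -
  define v where "v = (\<lambda>k. c k *\<^sub>R l2_embed \<pi> (g k))"
  have norm_v: "norm (v k) = \<bar>c k\<bar> * l2_norm \<pi> (g k)" for k
    by (simp add: v_def l2_norm_def)
  have summable_v: "summable (\<lambda>k. norm (v k))"
    using bound norm_v
    by (intro summable_comparison_test[OF _ \<open>summable b\<close>]) (auto simp: abs_mult l2_norm_nonneg)
  have "l2_embed \<pi> (\<lambda>x. \<Sum>k. c k * g k x) $ x = suminf v $ x" for x :: 'a
  proof -
    have "suminf v $ x = (\<Sum>k. sqrt (\<pi> x) * (c k * g k x))"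
      using bounded_linear.suminf[OF bounded_linear_vec_nth summable_norm_cancel[OF summable_v]]
      by (simp add: v_def l2_embed_def mult_ac)
    then show ?thesis
      by (simp add: l2_embed_def suminf_mult[OF summable])
  qed
  then have "l2_norm \<pi> (\<lambda>x. \<Sum>k. c k * g k x) = norm (suminf v)"
    unfolding l2_norm_def by (metis vec_eq_iff)
  also have "\<dots> \<le> (\<Sum>k. norm (v k))"
    by (rule summable_norm[OF summable_v])
  also have "\<dots> \<le> (\<Sum>k. b k)"
    using bound norm_v by (intro suminf_le summable_v \<open>summable b\<close>) auto
  finally show ?thesis .
qed

end

section \<open>Decay of the heat semigroup from a Rayleigh bound\<close>

lemma quadratic_nonneg_imp_discriminant_le:
  fixes a b c :: real
  assumes nonneg: "\<forall>\<tau>. 0 \<le> a + 2 * b * \<tau> + c * \<tau>\<^sup>2" and "c \<ge> 0"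
  shows "b\<^sup>2 \<le> a * c"
proof (cases "c = 0")
  case True
  have "b = 0"
  proof (rule ccontr)
    assume "b \<noteq> 0"
    then show False
      using nonneg[rule_format, of "- (a + 1) / (2 * b)"] True by simp
  qed
  then show ?thesis using True by simp
next
  case False
  then have "c > 0" using \<open>c \<ge> 0\<close> by simp
  have "0 \<le> a + 2 * b * (- b / c) + c * (- b / c)\<^sup>2"
    using nonneg by blast
  also have "\<dots> = a - b\<^sup>2 / c"
    using \<open>c > 0\<close> by (simp add: field_simps power2_eq_square)
  finally show ?thesis
    using \<open>c > 0\<close> by (simp add: field_simps mult.commute)
qed

definition positive_semidefinite :: "('a::finite \<Rightarrow> real) \<Rightarrow> ('a \<Rightarrow> 'a \<Rightarrow> real) \<Rightarrow> bool" where
  "positive_semidefinite \<pi> N \<longleftrightarrow> (\<forall>f. 0 \<le> l2_inner \<pi> (act N f) f)"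

lemma positive_semidefinite_Cauchy_Schwarz:
  assumes rev: "reversible N \<pi>" and psd: "positive_semidefinite \<pi> N"
  shows "(l2_inner \<pi> (act N f) g)\<^sup>2 \<le> l2_inner \<pi> (act N f) f * l2_inner \<pi> (act N g) g"
proof (rule quadratic_nonneg_imp_discriminant_le)
  have sym: "l2_inner \<pi> (act N g) f = l2_inner \<pi> (act N f) g"
    using l2_inner_act_reversible[OF rev, of g f] l2_inner_commute by metis
  show "\<forall>\<tau>. 0 \<le> l2_inner \<pi> (act N f) f + 2 * l2_inner \<pi> (act N f) g * \<tau> +
      l2_inner \<pi> (act N g) g * \<tau>\<^sup>2"
  proof
    fix \<tau>
    have "0 \<le> l2_inner \<pi> (act N (\<lambda>x. f x + \<tau> * g x)) (\<lambda>x. f x + \<tau> * g x)"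
      using psd by (simp add: positive_semidefinite_def)
    then show "0 \<le> l2_inner \<pi> (act N f) f + 2 * l2_inner \<pi> (act N f) g * \<tau> +
        l2_inner \<pi> (act N g) g * \<tau>\<^sup>2"
      unfolding act_add_scale l2_inner_add_scale_left l2_inner_add_scale_right sym
      by (simp add: power2_eq_square algebra_simps)
  qed
  show "0 \<le> l2_inner \<pi> (act N g) g"
    using psd by (simp add: positive_semidefinite_def)
qed

lemma l2_norm_act_le:
  assumes \<pi>: "\<forall>x. \<pi> x \<ge> 0" and rev: "reversible N \<pi>" and psd: "positive_semidefinite \<pi> N"
    and closed: "\<And>f. V f \<Longrightarrow> V (act N f)"
    and rayleigh: "\<And>f. V f \<Longrightarrow> l2_inner \<pi> (act N f) f \<le> c * l2_inner \<pi> f f"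
    and "c \<ge> 0" and "V f"
  shows "l2_norm \<pi> (act N f) \<le> c * l2_norm \<pi> f"
proof -
  define g where "g = act N f"
  have bound: "0 \<le> l2_inner \<pi> (act N h) h \<and> l2_inner \<pi> (act N h) h \<le> c * (l2_norm \<pi> h)\<^sup>2"
    if "V h" for h
    using psd rayleigh[OF that] unfolding positive_semidefinite_def l2_norm_power2[OF \<pi>] by blast
  have "((l2_norm \<pi> g)\<^sup>2)\<^sup>2 \<le> l2_inner \<pi> (act N f) f * l2_inner \<pi> (act N g) g"
    using positive_semidefinite_Cauchy_Schwarz[OF rev psd, of f g]
    by (simp only: g_def l2_norm_power2[OF \<pi>])
  also have "\<dots> \<le> (c * (l2_norm \<pi> f)\<^sup>2) * (c * (l2_norm \<pi> g)\<^sup>2)"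
    using bound[OF \<open>V f\<close>] bound[OF closed[OF \<open>V f\<close>]] \<open>c \<ge> 0\<close>
    by (intro mult_mono) (simp_all add: g_def)
  also have "\<dots> = (c * l2_norm \<pi> f)\<^sup>2 * (l2_norm \<pi> g)\<^sup>2"
    by algebra
  finally have key: "(l2_norm \<pi> g)\<^sup>2 * (l2_norm \<pi> g)\<^sup>2 \<le> (c * l2_norm \<pi> f)\<^sup>2 * (l2_norm \<pi> g)\<^sup>2"
    by (simp only: power2_eq_square[of "(l2_norm \<pi> g)\<^sup>2"])
  show ?thesis
  proof (cases "l2_norm \<pi> g = 0")
    case True
    then show ?thesis
      using \<open>c \<ge> 0\<close> l2_norm_nonneg[of \<pi> f] by (simp add: g_def)
  next
    case False
    have "(l2_norm \<pi> g)\<^sup>2 \<le> (c * l2_norm \<pi> f)\<^sup>2"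
      by (rule mult_right_le_imp_le[OF key]) (use False in simp)
    then have "l2_norm \<pi> g \<le> c * l2_norm \<pi> f"
      by (rule power2_le_imp_le) (use \<open>c \<ge> 0\<close> l2_norm_nonneg[of \<pi> f] in simp)
    then show ?thesis
      by (simp add: g_def)
  qed
qed

lemma l2_norm_funpow_act_le:
  assumes \<pi>: "\<forall>x. \<pi> x \<ge> 0" and rev: "reversible N \<pi>" and psd: "positive_semidefinite \<pi> N"
    and closed: "\<And>f. V f \<Longrightarrow> V (act N f)"
    and rayleigh: "\<And>f. V f \<Longrightarrow> l2_inner \<pi> (act N f) f \<le> c * l2_inner \<pi> f f"
    and "c \<ge> 0" and "V f"
  shows "l2_norm \<pi> ((act N ^^ k) f) \<le> c ^ k * l2_norm \<pi> f"
proof (induction k)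
  case (Suc k)
  have "V ((act N ^^ k) f)"
    using \<open>V f\<close> closed by (induction k) auto
  then have "l2_norm \<pi> ((act N ^^ Suc k) f) \<le> c * l2_norm \<pi> ((act N ^^ k) f)"
    using l2_norm_act_le[where V = V, OF \<pi> rev psd closed rayleigh \<open>c \<ge> 0\<close>] by simp
  also have "\<dots> \<le> c * (c ^ k * l2_norm \<pi> f)"
    using Suc \<open>c \<ge> 0\<close> by (simp add: mult_left_mono)
  finally show ?case by simp
qed simp

lemma reversible_lazy: "reversible T \<pi> \<Longrightarrow> reversible (lazy T) \<pi>"
  by (auto simp: reversible_def lazy_def algebra_simps)

lemma l2_inner_act_lazy:
  "l2_inner \<pi> (act (lazy T) f) f = (l2_inner \<pi> f f + l2_inner \<pi> (act T f) f) / 2"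
  by (simp add: l2_inner_def act_lazy algebra_simps sum.distrib sum_divide_distrib[symmetric])

lemma l2_inner_act_ge:
  assumes T: "substochastic T" and rev: "reversible T \<pi>" and \<pi>: "\<forall>x. \<pi> x \<ge> 0"
  shows "l2_inner \<pi> (act T f) f \<ge> - l2_inner \<pi> f f"
proof -
  define M where "M x y = \<pi> x * T x y * (f x)\<^sup>2" for x y
  have pair: "0 \<le> \<pi> x * T x y * f y * f x + (M x y + M y x) / 2" for x y
  proof -
    have "\<pi> y * T y x = \<pi> x * T x y"
      using rev by (simp add: reversible_def)
    then have "\<pi> x * T x y * f y * f x + (M x y + M y x) / 2 = \<pi> x * T x y * (f x + f y)\<^sup>2 / 2"
      by (simp add: M_def power2_eq_square field_simps)
    also have "\<dots> \<ge> 0"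
      using T \<pi> by (simp add: substochastic_def)
    finally show ?thesis .
  qed
  have diag: "(\<Sum>x\<in>UNIV. \<Sum>y\<in>UNIV. M x y) \<le> l2_inner \<pi> f f"
  proof -
    have "(\<Sum>x\<in>UNIV. \<Sum>y\<in>UNIV. M x y) = (\<Sum>x\<in>UNIV. \<pi> x * (f x)\<^sup>2 * (\<Sum>y\<in>UNIV. T x y))"
      by (simp add: M_def sum_distrib_left sum_distrib_right mult_ac)
    also have "\<dots> \<le> (\<Sum>x\<in>UNIV. \<pi> x * (f x)\<^sup>2 * 1)"
      using T \<pi> by (intro sum_mono mult_left_mono) (auto simp: substochastic_def)
    finally show ?thesis
      by (simp add: l2_inner_def power2_eq_square mult_ac)
  qed
  have "(\<Sum>x\<in>UNIV. \<Sum>y\<in>UNIV. (M x y + M y x) / 2) = (\<Sum>x\<in>UNIV. \<Sum>y\<in>UNIV. M x y)"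
    using sum.swap[of M UNIV UNIV] by (simp add: sum.distrib sum_divide_distrib[symmetric])
  moreover have "0 \<le> (\<Sum>x\<in>UNIV. \<Sum>y\<in>UNIV. \<pi> x * T x y * f y * f x + (M x y + M y x) / 2)"
    by (intro sum_nonneg pair)
  ultimately have "- l2_inner \<pi> f f \<le> (\<Sum>x\<in>UNIV. \<Sum>y\<in>UNIV. \<pi> x * T x y * f y * f x)"
    using diag by (simp add: sum.distrib)
  also have "\<dots> = l2_inner \<pi> (act T f) f"
    by (simp add: l2_inner_def act_def sum_distrib_left sum_distrib_right mult_ac)
  finally show ?thesis .
qed

lemma positive_semidefinite_lazy:
  assumes "substochastic T" and "reversible T \<pi>" and "\<forall>x. \<pi> x \<ge> 0"
  shows "positive_semidefinite \<pi> (lazy T)"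
  unfolding positive_semidefinite_def l2_inner_act_lazy
proof
  fix f
  show "0 \<le> (l2_inner \<pi> f f + l2_inner \<pi> (act T f) f) / 2"
    using l2_inner_act_ge[OF assms, of f] by simp
qed

text \<open>Pass to the lazy kernel, whose Rayleigh constant \<open>(1 + c) / 2\<close> is nonnegative, and use
  \<open>heat T u = heat (lazy T) (2 * u)\<close>.\<close>
lemma l2_norm_heat_le:
  assumes T: "substochastic T" and rev: "reversible T \<pi>" and \<pi>: "\<forall>x. \<pi> x \<ge> 0"
    and closed: "\<And>f. V f \<Longrightarrow> V (act (lazy T) f)"
    and rayleigh: "\<And>f. V f \<Longrightarrow> l2_inner \<pi> (act T f) f \<le> c * l2_inner \<pi> f f"
    and "c \<ge> -1" and "u \<ge> 0" and "V f"
  shows "l2_norm \<pi> (heat T u f) \<le> exp (- u * (1 - c)) * l2_norm \<pi> f"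
proof -
  define c' where "c' = (1 + c) / 2"
  have rayleigh': "l2_inner \<pi> (act (lazy T) g) g \<le> c' * l2_inner \<pi> g g" if "V g" for g
    using rayleigh[OF that] by (simp add: l2_inner_act_lazy c'_def field_simps)
  have norm_bound: "\<bar>poisson_weight (2 * u) k\<bar> * l2_norm \<pi> ((act (lazy T) ^^ k) f) \<le>
      poisson_weight (2 * u) k * c' ^ k * l2_norm \<pi> f" for k
    using l2_norm_funpow_act_le[where V = V, OF \<pi> reversible_lazy[OF rev]
        positive_semidefinite_lazy[OF T rev \<pi>] closed rayleigh', of f k]
      \<open>c \<ge> -1\<close> \<open>V f\<close> poisson_weight_nonneg[of "2 * u" k] \<open>u \<ge> 0\<close>
    by (simp add: c'_def mult_left_mono mult.assoc)
  have exponent: "exp (- (2 * u) * (1 - c')) = exp (- u * (1 - c))"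
    by (simp add: c'_def field_simps)
  have sums: "(\<lambda>k. poisson_weight (2 * u) k * c' ^ k * l2_norm \<pi> f)
      sums (exp (- u * (1 - c)) * l2_norm \<pi> f)"
    using sums_mult2[OF sums_poisson_weight_power[of "2 * u" c'], of "l2_norm \<pi> f"]
    by (simp only: exponent)
  obtain B where B: "\<forall>x. \<bar>f x\<bar> \<le> B" using finite_fun_abs_bounded by blast
  have "l2_norm \<pi> (heat T u f) \<le> (\<Sum>k. poisson_weight (2 * u) k * c' ^ k * l2_norm \<pi> f)"
    unfolding heat_lazy[OF T \<open>u \<ge> 0\<close>] heat_def
    using \<open>u \<ge> 0\<close> abs_funpow_act_le[OF substochastic_lazy[OF T]] B
    by (intro l2_norm_suminf_le[OF \<pi> _ norm_bound] summable_poisson_weight_mult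
        sums_summable[OF sums]) auto
  also have "\<dots> = exp (- u * (1 - c)) * l2_norm \<pi> f"
    using sums by (rule sums_unique[symmetric])
  finally show ?thesis .
qed

section \<open>The spectral gap\<close>

lemma eigenvalue_iff_act: "eigenvalue P \<mu> \<longleftrightarrow> (\<exists>v. v \<noteq> (\<lambda>_. 0) \<and> act P v = (\<lambda>x. \<mu> * v x))"
  unfolding eigenvalue_def act_def by (auto simp: fun_eq_iff)

lemma finite_fun_argmax: "\<exists>x. \<forall>y. (f :: 'a::finite \<Rightarrow> real) y \<le> f x"
proof -
  have "Max (range f) \<in> range f"
    by (intro Max_in) auto
  then obtain x where "f x = Max (range f)"
    by (metis rangeE)
  moreover have "f y \<le> Max (range f)" for y
    by (intro Max_ge) auto
  ultimately show ?thesis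
    by metis
qed

lemma abs_eigenvalue_le_1:
  assumes "stochastic P" and "eigenvalue P \<mu>"
  shows "\<bar>\<mu>\<bar> \<le> 1"
proof -
  obtain v where v: "v \<noteq> (\<lambda>_. 0)" "act P v = (\<lambda>x. \<mu> * v x)"
    using assms(2) eigenvalue_iff_act by blast
  obtain x where x: "\<forall>y. \<bar>v y\<bar> \<le> \<bar>v x\<bar>"
    using finite_fun_argmax[of "\<lambda>y. \<bar>v y\<bar>"] by blast
  obtain y where "v y \<noteq> 0"
    using v(1) by auto
  then have "\<bar>v x\<bar> > 0"
    using x[rule_format, of y] by linarith
  moreover have "\<bar>\<mu>\<bar> * \<bar>v x\<bar> \<le> 1 * \<bar>v x\<bar>"
    using abs_act_le[OF stochastic_imp_substochastic[OF assms(1)], of v "\<bar>v x\<bar>" x] x v(2)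
    by (simp add: abs_mult)
  ultimately show ?thesis
    by (rule mult_right_le_imp_le[rotated])
qed

lemma harmonic_max_propagates:
  assumes P: "stochastic P" and harmonic: "act P f = f"
    and max: "\<forall>y. f y \<le> f x" and "P x y > 0"
  shows "f y = f x"
proof (rule ccontr)
  assume "f y \<noteq> f x"
  then have "f y < f x" using max by (metis order_le_less)
  have "(\<Sum>w\<in>UNIV. P x w * (f x - f w)) = f x * (\<Sum>w\<in>UNIV. P x w) - act P f x"
    by (simp add: act_def algebra_simps sum_subtractf sum_distrib_left)
  also have "\<dots> = 0"
    using P harmonic by (simp add: stochastic_def fun_eq_iff)
  finally have "\<forall>w\<in>UNIV. P x w * (f x - f w) = 0"
    using P max by (subst sum_nonneg_eq_0_iff[symmetric]) (auto simp: stochastic_def)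
  then have "P x y * (f x - f y) = 0"
    by blast
  then show False
    using \<open>P x y > 0\<close> \<open>f y < f x\<close> by simp
qed

lemma harmonic_max_propagates_mpow:
  assumes P: "stochastic P" and harmonic: "act P f = f"
    and max: "\<forall>y. f y \<le> f x" and "mpow P n x y > 0"
  shows "f y = f x"
  using max \<open>mpow P n x y > 0\<close>
proof (induction n arbitrary: x)
  case (Suc n)
  have "\<exists>w. P x w * mpow P n w y > 0"
  proof (rule ccontr)
    assume "\<not> ?thesis"
    then have "(\<Sum>w\<in>UNIV. P x w * mpow P n w y) \<le> 0"
      by (simp add: sum_nonpos not_less)
    then show False
      using Suc.prems(2) by simp
  qed
  then obtain w where "P x w * mpow P n w y > 0"
    by blast
  then have "P x w > 0" and "mpow P n w y > 0"
    using P mpow_nonneg[OF P, of n w y] by (auto simp: stochastic_def zero_less_mult_iff)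
  then have "f w = f x"
    using harmonic_max_propagates[OF P harmonic Suc.prems(1)] by blast
  then show ?case
    using Suc.IH[of w] Suc.prems(1) \<open>mpow P n w y > 0\<close> by simp
qed (simp split: if_splits)

lemma harmonic_imp_constant:
  assumes "stochastic P" and "irreducible_chain P" and "act P f = f"
  shows "f y = f z"
proof -
  obtain x where max: "\<forall>y. f y \<le> f x"
    using finite_fun_argmax by blast
  have "f y = f x" for y
    using assms(2) harmonic_max_propagates_mpow[OF assms(1,3) max]
    by (meson irreducible_chain_def)
  then show ?thesis
    by metis
qed

locale reversible_chain =
  fixes P :: "'a::finite \<Rightarrow> 'a \<Rightarrow> real" and \<pi> :: "'a \<Rightarrow> real"
  assumes stochastic: "stochastic P" and irreducible: "irreducible_chain P"
    and weight_pos: "\<forall>x. \<pi> x > 0" and weight_sum: "(\<Sum>x\<in>UNIV. \<pi> x) = 1"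
    and reversible: "reversible P \<pi>" and card_ge_2: "CARD('a) \<ge> 2"
begin

lemma weight_nonneg: "\<forall>x. \<pi> x \<ge> 0"
  using weight_pos by (simp add: less_imp_le)

lemma weight_ne_0 [simp]: "\<pi> x \<noteq> 0"
  using weight_pos by (metis less_irrefl)

lemma l2_inner_self_eq_0_iff: "l2_inner \<pi> f f = 0 \<longleftrightarrow> f = (\<lambda>_. 0)"
proof
  assume "l2_inner \<pi> f f = 0"
  then have "\<forall>x\<in>UNIV. \<pi> x * f x * f x = 0"
    using weight_nonneg
    by (subst sum_nonneg_eq_0_iff[symmetric]) (auto simp: l2_inner_def mult.assoc)
  then show "f = (\<lambda>_. 0)"
    using weight_pos by (metis UNIV_I less_irrefl mult_eq_0_iff)
qed (simp add: l2_inner_def)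

lemma l2_inner_self_pos: "f \<noteq> (\<lambda>_. 0) \<Longrightarrow> l2_inner \<pi> f f > 0"
  using l2_inner_self_nonneg[OF weight_nonneg, of f] l2_inner_self_eq_0_iff[of f] by linarith

lemma eigenvectors_orthogonal:
  assumes "act P v = (\<lambda>x. \<mu> * v x)" and "act P w = (\<lambda>x. \<nu> * w x)" and "\<mu> \<noteq> \<nu>"
  shows "l2_inner \<pi> v w = 0"
proof -
  have "\<mu> * l2_inner \<pi> v w = l2_inner \<pi> (act P v) w"
    using assms(1) by (simp add: l2_inner_scale_left)
  also have "\<dots> = l2_inner \<pi> v (act P w)"
    by (rule l2_inner_act_reversible[OF reversible])
  also have "\<dots> = \<nu> * l2_inner \<pi> v w"
    using assms(2) l2_inner_scale_left l2_inner_commute by metis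
  finally show ?thesis
    using assms(3) by simp
qed

lemma finite_eigenvalues: "finite {\<mu>. eigenvalue P \<mu>}"
proof -
  define vec where "vec \<mu> = l2_embed \<pi> (SOME v. v \<noteq> (\<lambda>_. 0) \<and> act P v = (\<lambda>x. \<mu> * v x))" for \<mu>
  have eigvec: "\<exists>v. vec \<mu> = l2_embed \<pi> v \<and> v \<noteq> (\<lambda>_. 0) \<and> act P v = (\<lambda>x. \<mu> * v x)"
    if "eigenvalue P \<mu>" for \<mu>
    using someI_ex[OF that[unfolded eigenvalue_iff_act]] by (auto simp: vec_def)
  have nonzero: "vec \<mu> \<noteq> 0" if "eigenvalue P \<mu>" for \<mu>
    using eigvec[OF that] by (auto simp: vec_eq_iff l2_embed_def fun_eq_iff)
  have orthogonal: "inner (vec \<mu>) (vec \<nu>) = 0"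
    if "eigenvalue P \<mu>" "eigenvalue P \<nu>" "\<mu> \<noteq> \<nu>" for \<mu> \<nu>
    using eigvec[OF that(1)] eigvec[OF that(2)] eigenvectors_orthogonal that(3)
    by (auto simp: inner_l2_embed[OF weight_nonneg])
  have "inj_on vec {\<mu>. eigenvalue P \<mu>}"
    using orthogonal nonzero by (intro inj_onI) (metis inner_eq_zero_iff mem_Collect_eq)
  moreover have "independent (vec ` {\<mu>. eigenvalue P \<mu>})"
    using orthogonal nonzero
    by (intro pairwise_orthogonal_independent) (auto simp: pairwise_def orthogonal_def)
  ultimately show ?thesis
    using independent_bound finite_imageD by blast
qed

lemma ex_mean_zero_nonzero: "\<exists>g. mean \<pi> g = 0 \<and> g \<noteq> (\<lambda>_. 0)"
proof -
  obtain x y :: 'a where "x \<noteq> y"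
    using card_ge_2 card_le_Suc0_iff_eq[of "UNIV :: 'a set"] by auto
  define g where "g z = (if z = x then 1 / \<pi> x else 0) - (if z = y then 1 / \<pi> y else 0)" for z
  have "mean \<pi> g = 0"
    by (simp add: mean_def g_def right_diff_distrib sum_subtractf if_distrib[of "\<lambda>c. \<pi> _ * c"]
        cong: if_cong)
  moreover have "g x \<noteq> 0"
    using \<open>x \<noteq> y\<close> weight_pos by (simp add: g_def)
  ultimately show ?thesis
    by fastforce
qed

lemma normalize_mean_zero:
  assumes "mean \<pi> g = 0" and "g \<noteq> (\<lambda>_. 0)"
  defines "h \<equiv> (\<lambda>x. g x / l2_norm \<pi> g)"
  shows "mean \<pi> h = 0" and "l2_inner \<pi> h h = 1"
    and "l2_inner \<pi> (act P h) h = l2_inner \<pi> (act P g) g / l2_inner \<pi> g g"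
proof -
  have "l2_inner \<pi> g g > 0"
    using assms(2) l2_inner_self_pos by simp
  then have "l2_norm \<pi> g \<noteq> 0"
    using l2_norm_power2[OF weight_nonneg, of g] by auto
  have h: "h = (\<lambda>x. (1 / l2_norm \<pi> g) * g x)"
    by (simp add: h_def)
  have scale: "l2_inner \<pi> (act T h) h = l2_inner \<pi> (act T g) g / l2_inner \<pi> g g" for T
    unfolding h act_scale l2_inner_scale_left l2_inner_scale_right
    by (simp add: l2_norm_power2[OF weight_nonneg, symmetric] power2_eq_square)
  show "mean \<pi> h = 0"
    using assms(1) by (simp add: h_def mean_def sum_divide_distrib[symmetric])
  show "l2_inner \<pi> (act P h) h = l2_inner \<pi> (act P g) g / l2_inner \<pi> g g"
    by (rule scale)
  show "l2_inner \<pi> h h = 1"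
    unfolding h l2_inner_scale_left l2_inner_scale_right
    using \<open>l2_norm \<pi> g \<noteq> 0\<close>
    by (simp add: l2_norm_power2[OF weight_nonneg, symmetric] power2_eq_square)
qed

lemma l2_embed_mem_sphere_orthogonal_iff:
  "l2_embed \<pi> f \<in> sphere 0 1 \<inter> {w. inner (\<chi> x. sqrt (\<pi> x)) w = 0} \<longleftrightarrow>
    mean \<pi> f = 0 \<and> l2_inner \<pi> f f = 1"
proof -
  have "inner (\<chi> x. sqrt (\<pi> x)) (l2_embed \<pi> f) = mean \<pi> f"
    using weight_nonneg by (simp add: inner_vec_def l2_embed_def mean_def mult.assoc[symmetric])
  moreover have "norm (l2_embed \<pi> f) = 1 \<longleftrightarrow> l2_inner \<pi> f f = 1"
    using l2_norm_power2[OF weight_nonneg, of f] norm_ge_zero[of "l2_embed \<pi> f"]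
    unfolding l2_norm_def by (smt (verit) power2_eq_1_iff)
  ultimately show ?thesis
    by auto
qed

lemma ex_unit_rayleigh_maximizer:
  obtains f0 where "mean \<pi> f0 = 0" "l2_inner \<pi> f0 f0 = 1"
    "\<And>f. mean \<pi> f = 0 \<Longrightarrow> l2_inner \<pi> f f = 1 \<Longrightarrow>
      l2_inner \<pi> (act P f) f \<le> l2_inner \<pi> (act P f0) f0"
proof -
  define unembed where "unembed w = (\<lambda>x. w $ x / sqrt (\<pi> x))" for w :: "real ^ 'a"
  define K where "K = sphere (0 :: real ^ 'a) 1 \<inter> {w. inner (\<chi> x. sqrt (\<pi> x)) w = 0}"
  have unembed_embed: "unembed (l2_embed \<pi> f) = f" for f
    by (simp add: fun_eq_iff unembed_def l2_embed_def)
  have embed_unembed: "l2_embed \<pi> (unembed w) = w" for w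
    by (simp add: vec_eq_iff unembed_def l2_embed_def)
  note K_iff = l2_embed_mem_sphere_orthogonal_iff[folded K_def]
  have compact: "compact K"
    unfolding K_def by (intro compact_Int_closed compact_sphere closed_hyperplane)
  have nonempty: "K \<noteq> {}"
  proof -
    obtain g where g: "mean \<pi> g = 0" "g \<noteq> (\<lambda>_. 0)"
      using ex_mean_zero_nonzero by blast
    then have "l2_embed \<pi> (\<lambda>x. g x / l2_norm \<pi> g) \<in> K"
      unfolding K_iff using normalize_mean_zero(1,2)[OF g] by blast
    then show ?thesis by blast
  qed
  have continuous: "continuous_on K (\<lambda>w. l2_inner \<pi> (act P (unembed w)) (unembed w))"
    unfolding l2_inner_def act_def unembed_def
    by (intro continuous_intros) auto
  obtain w0 where "w0 \<in> K"
    and max: "\<And>w. w \<in> K \<Longrightarrow>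
      l2_inner \<pi> (act P (unembed w)) (unembed w) \<le> l2_inner \<pi> (act P (unembed w0)) (unembed w0)"
    using continuous_attains_sup[OF compact nonempty continuous] by blast
  show ?thesis
  proof
    show "mean \<pi> (unembed w0) = 0" "l2_inner \<pi> (unembed w0) (unembed w0) = 1"
      using \<open>w0 \<in> K\<close> K_iff[of "unembed w0"] by (simp_all add: embed_unembed)
    show "l2_inner \<pi> (act P f) f \<le> l2_inner \<pi> (act P (unembed w0)) (unembed w0)"
      if "mean \<pi> f = 0" "l2_inner \<pi> f f = 1" for f
      using max[of "l2_embed \<pi> f"] that K_iff by (simp add: unembed_embed)
  qed
qed

lemma ex_rayleigh_maximizer:
  obtains f0 where "mean \<pi> f0 = 0" and "l2_inner \<pi> f0 f0 = 1"
    and "\<And>g. mean \<pi> g = 0 \<Longrightarrow> l2_inner \<pi> (act P g) g \<le> l2_inner \<pi> (act P f0) f0 * l2_inner \<pi> g g"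
proof -
  obtain f0 where f0: "mean \<pi> f0 = 0" "l2_inner \<pi> f0 f0 = 1"
    and max: "\<And>f. mean \<pi> f = 0 \<Longrightarrow> l2_inner \<pi> f f = 1 \<Longrightarrow>
      l2_inner \<pi> (act P f) f \<le> l2_inner \<pi> (act P f0) f0"
    using ex_unit_rayleigh_maximizer by blast
  have "l2_inner \<pi> (act P g) g \<le> l2_inner \<pi> (act P f0) f0 * l2_inner \<pi> g g"
    if "mean \<pi> g = 0" for g
  proof (cases "g = (\<lambda>_. 0)")
    case True
    then show ?thesis by (simp add: l2_inner_def)
  next
    case False
    then have "l2_inner \<pi> g g > 0"
      by (rule l2_inner_self_pos)
    moreover have "l2_inner \<pi> (act P g) g / l2_inner \<pi> g g \<le> l2_inner \<pi> (act P f0) f0"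
      using max normalize_mean_zero[OF that False] by metis
    ultimately show ?thesis
      by (simp add: divide_le_eq)
  qed
  then show ?thesis
    using that f0 by blast
qed

text \<open>A maximiser of the Rayleigh quotient over mean-zero functions is an eigenfunction, and its
  eigenvalue dominates every eigenvalue other than \<open>1\<close>; hence it is \<open>lambda2 P\<close>.\<close>
context
  fixes f0 :: "'a \<Rightarrow> real" and \<mu> :: real
  assumes f0_mean: "mean \<pi> f0 = 0" and f0_unit: "l2_inner \<pi> f0 f0 = 1"
    and f0_max: "\<And>g. mean \<pi> g = 0 \<Longrightarrow> l2_inner \<pi> (act P g) g \<le> \<mu> * l2_inner \<pi> g g"
    and f0_value: "l2_inner \<pi> (act P f0) f0 = \<mu>"
begin

lemma rayleigh_maximizer_first_variation:
  assumes "mean \<pi> g = 0"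
  shows "l2_inner \<pi> (act P f0) g = \<mu> * l2_inner \<pi> f0 g"
proof -
  define b where "b = \<mu> * l2_inner \<pi> f0 g - l2_inner \<pi> (act P f0) g"
  define c where "c = \<mu> * l2_inner \<pi> g g - l2_inner \<pi> (act P g) g"
  have sym: "l2_inner \<pi> (act P g) f0 = l2_inner \<pi> (act P f0) g"
    using l2_inner_act_reversible[OF reversible, of g f0] l2_inner_commute by metis
  have "0 \<le> 0 + 2 * b * \<tau> + c * \<tau>\<^sup>2" for \<tau>
  proof -
    have "mean \<pi> (\<lambda>x. f0 x + \<tau> * g x) = 0"
      using f0_mean assms by (simp add: mean_add_scale)
    then have "l2_inner \<pi> (act P (\<lambda>x. f0 x + \<tau> * g x)) (\<lambda>x. f0 x + \<tau> * g x) \<le>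
        \<mu> * l2_inner \<pi> (\<lambda>x. f0 x + \<tau> * g x) (\<lambda>x. f0 x + \<tau> * g x)"
      by (rule f0_max)
    then show ?thesis
      unfolding act_add_scale l2_inner_add_scale_left l2_inner_add_scale_right
        sym f0_unit f0_value l2_inner_commute[of \<pi> g f0] b_def c_def
      by (simp add: power2_eq_square algebra_simps)
  qed
  then have "b\<^sup>2 \<le> 0 * c"
    using f0_max[OF assms] by (intro quadratic_nonneg_imp_discriminant_le) (auto simp: c_def)
  then show ?thesis
    by (simp add: b_def)
qed

lemma rayleigh_maximizer_eigenvector: "act P f0 = (\<lambda>x. \<mu> * f0 x)"
proof -
  define g where "g = (\<lambda>x. act P f0 x + (- \<mu>) * f0 x)"
  have "mean \<pi> g = 0"
    using mean_act[OF stochastic reversible, of f0] f0_mean unfolding g_def mean_add_scale by simp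
  have "l2_inner \<pi> g g = l2_inner \<pi> (act P f0) g - \<mu> * l2_inner \<pi> f0 g"
    unfolding g_def l2_inner_add_scale_left by simp
  also have "\<dots> = 0"
    using rayleigh_maximizer_first_variation[OF \<open>mean \<pi> g = 0\<close>] by simp
  finally show ?thesis
    using l2_inner_self_eq_0_iff by (simp add: g_def fun_eq_iff)
qed

lemma rayleigh_max_ne_1: "\<mu> \<noteq> 1"
proof
  assume "\<mu> = 1"
  then have "act P f0 = f0"
    using rayleigh_maximizer_eigenvector by simp
  then have "f0 = (\<lambda>_. f0 x)" for x
    using harmonic_imp_constant[OF stochastic irreducible] by blast
  have "f0 x = 0" for x
  proof -
    have "f0 x = mean \<pi> (\<lambda>_. f0 x)"
      using weight_sum by (simp add: mean_const)
    also have "\<dots> = mean \<pi> f0"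
      using \<open>f0 = (\<lambda>_. f0 x)\<close> by metis
    finally show ?thesis
      using f0_mean by simp
  qed
  then show False
    using f0_unit by (simp add: l2_inner_def)
qed

lemma eigenvalue_le_rayleigh_max:
  assumes "eigenvalue P \<nu>" and "\<nu> \<noteq> 1"
  shows "\<nu> \<le> \<mu>"
proof -
  obtain v where v: "v \<noteq> (\<lambda>_. 0)" "act P v = (\<lambda>x. \<nu> * v x)"
    using assms(1) eigenvalue_iff_act by blast
  have "l2_inner \<pi> v (\<lambda>_. 1) = 0"
    using eigenvectors_orthogonal[OF v(2) _ assms(2)] act_const[OF stochastic] by simp
  then have "mean \<pi> v = 0"
    by (simp add: mean_def l2_inner_def)
  have "\<nu> * l2_inner \<pi> v v = l2_inner \<pi> (act P v) v"
    using v(2) by (simp add: l2_inner_scale_left)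
  also have "\<dots> \<le> \<mu> * l2_inner \<pi> v v"
    by (rule f0_max[OF \<open>mean \<pi> v = 0\<close>])
  finally show ?thesis
    using l2_inner_self_pos[OF v(1)] by (simp add: mult_le_cancel_right)
qed

lemma rayleigh_max_eigenvalue: "eigenvalue P \<mu>"
proof -
  have "f0 \<noteq> (\<lambda>_. 0)"
    using f0_unit by (auto simp: l2_inner_def)
  then show ?thesis
    using rayleigh_maximizer_eigenvector unfolding eigenvalue_iff_act by blast
qed

lemma lambda2_eq_rayleigh_max: "lambda2 P = \<mu>"
  unfolding lambda2_def
proof (rule Max_eqI)
  show "finite {\<nu>. eigenvalue P \<nu> \<and> \<nu> \<noteq> 1}"
    using finite_eigenvalues by (rule rev_finite_subset) auto
  show "\<mu> \<in> {\<nu>. eigenvalue P \<nu> \<and> \<nu> \<noteq> 1}"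
    using rayleigh_max_eigenvalue rayleigh_max_ne_1 by blast
qed (use eigenvalue_le_rayleigh_max in auto)

end

lemma mean_le_l2_norm: "mean \<pi> f \<le> l2_norm \<pi> f"
proof -
  have "l2_norm \<pi> (\<lambda>_. 1) = 1"
    using l2_norm_power2[OF weight_nonneg, of "\<lambda>_. 1"] weight_sum l2_norm_nonneg[of \<pi> "\<lambda>_. 1"]
    by (simp add: l2_inner_def power2_eq_1_iff)
  then show ?thesis
    using abs_l2_inner_le[OF weight_nonneg, of f "\<lambda>_. 1"] by (simp add: mean_def l2_inner_def)
qed

lemma mean_centred: "mean \<pi> (\<lambda>x. f x - mean \<pi> f) = 0"
  using weight_sum by (simp add: mean_diff_const)

lemma l2_norm_centred_le: "l2_norm \<pi> (\<lambda>x. f x - mean \<pi> f) \<le> l2_norm \<pi> f"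
proof -
  have "(l2_norm \<pi> (\<lambda>x. f x - mean \<pi> f))\<^sup>2 = (l2_norm \<pi> f)\<^sup>2 - (mean \<pi> f)\<^sup>2"
    unfolding l2_norm_power2[OF weight_nonneg] l2_inner_diff_const
    using weight_sum by (simp add: mean_def power2_eq_square)
  then have "(l2_norm \<pi> (\<lambda>x. f x - mean \<pi> f))\<^sup>2 \<le> (l2_norm \<pi> f)\<^sup>2"
    by simp
  then show ?thesis
    by (rule power2_le_imp_le) (simp add: l2_norm_nonneg)
qed

lemma poincare_inequality:
  assumes "mean \<pi> f = 0"
  shows "l2_inner \<pi> (act P f) f \<le> lambda2 P * l2_inner \<pi> f f"
proof -
  obtain f0 where "mean \<pi> f0 = 0" "l2_inner \<pi> f0 f0 = 1"
    and max: "\<And>g. mean \<pi> g = 0 \<Longrightarrow> l2_inner \<pi> (act P g) g \<le> l2_inner \<pi> (act P f0) f0 * l2_inner \<pi> g g"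
    using ex_rayleigh_maximizer by blast
  then show ?thesis
    using lambda2_eq_rayleigh_max[OF _ _ max refl] assms max by simp
qed

lemma poincare_inequality_uncentred:
  "l2_inner \<pi> (act P f) f \<le> lambda2 P * l2_inner \<pi> f f + (1 - lambda2 P) * (mean \<pi> f)\<^sup>2"
proof -
  define m where "m = mean \<pi> f"
  have centred: "l2_inner \<pi> (\<lambda>x. g x - m) (\<lambda>x. f x - m) = l2_inner \<pi> g f - m\<^sup>2"
    if "mean \<pi> g = m" for g
    using that weight_sum by (simp add: l2_inner_diff_const m_def power2_eq_square)
  have "act P (\<lambda>x. f x - m) = (\<lambda>x. act P f x - m)"
    unfolding act_diff act_const[OF stochastic] ..
  then have "l2_inner \<pi> (\<lambda>x. act P f x - m) (\<lambda>x. f x - m) \<le>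
      lambda2 P * l2_inner \<pi> (\<lambda>x. f x - m) (\<lambda>x. f x - m)"
    using poincare_inequality[OF mean_centred[of f]] by (simp add: m_def)
  moreover have "mean \<pi> (act P f) = m" and "mean \<pi> f = m"
    using mean_act[OF stochastic reversible] by (simp_all add: m_def)
  ultimately have "l2_inner \<pi> (act P f) f - m\<^sup>2 \<le> lambda2 P * (l2_inner \<pi> f f - m\<^sup>2)"
    by (simp add: centred)
  then show ?thesis
    by (simp add: m_def algebra_simps)
qed

lemma lambda2_eigenvalue: "eigenvalue P (lambda2 P)" and lambda2_ne_1: "lambda2 P \<noteq> 1"
proof -
  obtain f0 where "mean \<pi> f0 = 0" "l2_inner \<pi> f0 f0 = 1"
    and max: "\<And>g. mean \<pi> g = 0 \<Longrightarrow> l2_inner \<pi> (act P g) g \<le> l2_inner \<pi> (act P f0) f0 * l2_inner \<pi> g g"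
    using ex_rayleigh_maximizer by blast
  then show "eigenvalue P (lambda2 P)" "lambda2 P \<noteq> 1"
    using lambda2_eq_rayleigh_max[OF _ _ max refl] rayleigh_max_eigenvalue[OF _ _ max refl]
      rayleigh_max_ne_1[OF _ _ max refl]
    by simp_all
qed

lemma lambda2_less_1: "lambda2 P < 1"
  using abs_eigenvalue_le_1[OF stochastic lambda2_eigenvalue] lambda2_ne_1 by linarith

lemma lambda2_ge_minus_1: "lambda2 P \<ge> -1"
  using abs_eigenvalue_le_1[OF stochastic lambda2_eigenvalue] by linarith

end

section \<open>Hitting a target set\<close>

locale hitting_chain = reversible_chain P \<pi>
  for P :: "'a::finite \<Rightarrow> 'a \<Rightarrow> real" and \<pi> +
  fixes A :: "'a set"
  assumes target_nonempty: "A \<noteq> {}"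
begin

definition eps :: real where "eps = (\<Sum>x\<in>A. \<pi> x)"

definition gap :: real where "gap = 1 - lambda2 P"

definition killed :: "'a \<Rightarrow> 'a \<Rightarrow> real" where
  "killed x y = (if x \<in> A \<or> y \<in> A then 0 else P x y)"

text \<open>\<open>survival k z\<close> is the probability that the jump chain started at \<open>z\<close> avoids \<open>A\<close>
  at times \<open>0, \<dots>, k\<close>; \<open>cont_survival u z = P\<^sub>z[T\<^sub>A > u]\<close>.\<close>
definition survival :: "nat \<Rightarrow> 'a \<Rightarrow> real" where
  "survival k = (act killed ^^ k) (indicator (- A))"

definition cont_survival :: "real \<Rightarrow> 'a \<Rightarrow> real" where
  "cont_survival u = heat killed u (indicator (- A))"

lemma eps_pos: "eps > 0"
proof -
  obtain a where "a \<in> A"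
    using target_nonempty by blast
  then have "\<pi> a \<le> eps"
    unfolding eps_def using weight_nonneg by (intro member_le_sum) auto
  then show ?thesis
    using weight_pos by (metis less_le_trans)
qed

lemma l2_inner_indicator_compl: "l2_inner \<pi> (indicator (- A)) (indicator (- A)) = 1 - eps"
proof -
  have "l2_inner \<pi> (indicator (- A)) (indicator (- A)) =
      (\<Sum>x\<in>UNIV. \<pi> x - (if x \<in> A then \<pi> x else 0))"
    unfolding l2_inner_def by (intro sum.cong) (auto simp: indicator_def)
  also have "\<dots> = 1 - eps"
    using sum.inter_restrict[of UNIV \<pi> A] by (simp add: sum_subtractf weight_sum eps_def)
  finally show ?thesis .
qed

lemma eps_le_1: "eps \<le> 1"
  using l2_inner_indicator_compl l2_inner_self_nonneg[OF weight_nonneg] by (metis diff_ge_0_iff_ge)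

lemma gap_pos: "gap > 0"
  using lambda2_less_1 by (simp add: gap_def)

lemma gap_le_2: "gap \<le> 2"
  using lambda2_ge_minus_1 by (simp add: gap_def)

lemma substochastic_killed: "substochastic killed"
proof -
  have "(\<Sum>y\<in>UNIV. killed x y) \<le> (\<Sum>y\<in>UNIV. P x y)" for x
    using stochastic by (intro sum_mono) (auto simp: killed_def stochastic_def)
  then show ?thesis
    using stochastic by (force simp: substochastic_def killed_def stochastic_def)
qed

lemma reversible_killed: "reversible killed \<pi>"
  using reversible by (auto simp: reversible_def killed_def)

lemma act_killed_target: "x \<in> A \<Longrightarrow> act killed f x = 0"
  by (simp add: act_def killed_def)

lemma l2_inner_act_killed:
  assumes "\<forall>x\<in>A. f x = 0"
  shows "l2_inner \<pi> (act killed f) f = l2_inner \<pi> (act P f) f"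
proof -
  have pointwise: "act killed f x * f x = act P f x * f x" for x
    using assms by (cases "x \<in> A") (auto simp: act_def killed_def intro!: sum.cong)
  show ?thesis
    unfolding l2_inner_def mult.assoc pointwise ..
qed

text \<open>Cauchy--Schwarz against the indicator of \<open>- A\<close> bounds the mean of such a function by
  \<open>sqrt (1 - eps)\<close> times its norm.\<close>
lemma rayleigh_vanishing_on_target:
  assumes vanish: "\<forall>x\<in>A. f x = 0"
  shows "l2_inner \<pi> (act P f) f \<le> (1 - gap * eps) * l2_inner \<pi> f f"
proof -
  have "mean \<pi> f = l2_inner \<pi> f (indicator (- A))"
    unfolding mean_def l2_inner_def using vanish by (intro sum.cong) auto
  then have "\<bar>mean \<pi> f\<bar> \<le> l2_norm \<pi> f * l2_norm \<pi> (indicator (- A))"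
    using abs_l2_inner_le[OF weight_nonneg] by simp
  then have "(mean \<pi> f)\<^sup>2 \<le> (l2_norm \<pi> f * l2_norm \<pi> (indicator (- A)))\<^sup>2"
    using power_mono[of "\<bar>mean \<pi> f\<bar>" _ 2] by simp
  then have "(mean \<pi> f)\<^sup>2 \<le> l2_inner \<pi> f f * (1 - eps)"
    by (simp add: power_mult_distrib l2_norm_power2[OF weight_nonneg] l2_inner_indicator_compl)
  then have "gap * (mean \<pi> f)\<^sup>2 \<le> gap * (l2_inner \<pi> f f * (1 - eps))"
    using gap_pos by simp
  then show ?thesis
    using poincare_inequality_uncentred[of f] by (simp add: gap_def algebra_simps)
qed

lemma l2_norm_heat_killed_le:
  assumes "\<forall>x\<in>A. f x = 0" and "u \<ge> 0"
  shows "l2_norm \<pi> (heat killed u f) \<le> exp (- u * gap * eps) * l2_norm \<pi> f"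
proof -
  have "gap * eps \<le> 2 * 1"
    using gap_le_2 eps_le_1 gap_pos eps_pos by (intro mult_mono) auto
  then have "l2_norm \<pi> (heat killed u f) \<le> exp (- u * (1 - (1 - gap * eps))) * l2_norm \<pi> f"
    using assms rayleigh_vanishing_on_target
    by (intro l2_norm_heat_le[where V = "\<lambda>f. \<forall>x\<in>A. f x = 0",
          OF substochastic_killed reversible_killed weight_nonneg])
      (simp_all add: act_lazy act_killed_target l2_inner_act_killed)
  then show ?thesis
    by (simp add: mult.assoc)
qed

lemma l2_norm_heat_mean_zero_le:
  assumes "mean \<pi> f = 0" and "u \<ge> 0"
  shows "l2_norm \<pi> (heat P u f) \<le> exp (- u * gap) * l2_norm \<pi> f"
  unfolding gap_def
  using assms poincare_inequality lambda2_ge_minus_1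
    mean_act[OF stochastic_lazy[OF stochastic] reversible_lazy[OF reversible]]
  by (intro l2_norm_heat_le[where V = "\<lambda>f. mean \<pi> f = 0",
        OF stochastic_imp_substochastic[OF stochastic] reversible weight_nonneg]) simp_all

end

context hitting_chain
begin

lemma killed_nonneg: "\<forall>x y. killed x y \<ge> 0"
  using substochastic_killed by (simp add: substochastic_def)

lemma survival_target: "x \<in> A \<Longrightarrow> survival k x = 0"
  by (cases k) (simp_all add: survival_def act_killed_target)

lemma survival_nonneg: "survival k z \<ge> 0"
  unfolding survival_def by (rule funpow_act_nonneg[OF killed_nonneg]) simp

lemma survival_le_1: "survival k z \<le> 1"
  using abs_funpow_act_le[OF substochastic_killed, of "indicator (- A)" 1 k z]
  by (simp add: survival_def)

lemma hit_prob_eq_survival: "hit_prob P A k z = 1 - survival k z"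
proof (induction k arbitrary: z)
  case 0
  then show ?case by (simp add: survival_def)
next
  case (Suc k)
  show ?case
  proof (cases "z \<in> A")
    case True
    then show ?thesis by (simp add: survival_target)
  next
    case False
    have "hit_prob P A (Suc k) z = (\<Sum>y\<in>UNIV. P z y) - (\<Sum>y\<in>UNIV. P z y * survival k y)"
      using False Suc by (simp add: right_diff_distrib sum_subtractf)
    also have "(\<Sum>y\<in>UNIV. P z y * survival k y) = act killed (survival k) z"
      unfolding act_def using False by (intro sum.cong) (auto simp: killed_def survival_target)
    also have "\<dots> = survival (Suc k) z"
      by (simp add: survival_def)
    finally show ?thesis
      using stochastic by (simp add: stochastic_def)
  qed
qed

lemma survival_Suc_le: "survival (Suc k) z \<le> survival k z"
proof (induction k arbitrary: z)
  case 0
  show ?case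
    using survival_le_1[of 1 z] by (cases "z \<in> A") (simp_all add: survival_def act_killed_target)
next
  case (Suc k)
  then show ?case
    unfolding survival_def funpow.simps(2) o_apply by (intro act_mono[OF killed_nonneg]) simp
qed

lemma survival_antimono: "m \<le> n \<Longrightarrow> survival n z \<le> survival m z"
  using lift_Suc_antimono_le[of "\<lambda>k. survival k z"] survival_Suc_le by blast

lemma funpow_act_killed_le:
  assumes "\<And>y. h y \<ge> 0"
  shows "(act killed ^^ j) h x \<le> (act P ^^ j) h x"
proof (induction j arbitrary: x)
  case (Suc j)
  have "act killed ((act killed ^^ j) h) x \<le> act killed ((act P ^^ j) h) x"
    using Suc by (intro act_mono[OF killed_nonneg])
  also have "\<dots> \<le> act P ((act P ^^ j) h) x"
    using stochastic assms
    by (intro act_mono_kernel funpow_act_nonneg) (auto simp: killed_def stochastic_def)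
  finally show ?case by simp
qed simp

text \<open>Forget the killing during the first \<open>j\<close> steps.\<close>
lemma survival_add_le: "survival (j + m) z \<le> (\<Sum>y\<in>UNIV. mpow P j z y * survival m y)"
proof -
  have "survival (j + m) z = (act killed ^^ j) (survival m) z"
    by (simp add: survival_def funpow_add)
  also have "\<dots> \<le> (act P ^^ j) (survival m) z"
    by (rule funpow_act_killed_le) (rule survival_nonneg)
  finally show ?thesis
    by (simp add: funpow_act_mpow)
qed

lemma cont_survival_eq: "cont_survival u z = (\<Sum>k. poisson_weight u k * survival k z)"
  by (simp add: cont_survival_def heat_def survival_def)

lemma abs_survival_le_1: "\<bar>survival k z\<bar> \<le> 1"
  using survival_nonneg survival_le_1 by (simp add: abs_le_iff order_trans[OF _ survival_nonneg])

lemma cont_survival_le_1: "u \<ge> 0 \<Longrightarrow> cont_survival u z \<le> 1"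
  using abs_suminf_poisson_weight_mult_le[OF _ abs_survival_le_1]
  by (simp add: cont_survival_eq abs_le_iff)

lemma cont_hit_prob_eq:
  assumes "u \<ge> 0"
  shows "cont_hit_prob P A z u = 1 - cont_survival u z"
proof -
  have "cont_hit_prob P A z u = (\<Sum>k. poisson_weight u k - poisson_weight u k * survival k z)"
    using assms by (simp add: cont_hit_prob_def hit_prob_eq_survival poisson_weight_def
        right_diff_distrib)
  also have "\<dots> = 1 - cont_survival u z"
    by (simp add: suminf_diff[symmetric, OF summable_poisson_weight
          summable_poisson_weight_mult[OF assms abs_survival_le_1]]
        suminf_poisson_weight cont_survival_eq)
  finally show ?thesis .
qed

lemma cont_survival_add_le:
  assumes "a \<ge> 0" and "b \<ge> 0"
  shows "cont_survival (a + b) z \<le> heat P a (cont_survival b) z"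
proof -
  have "cont_survival (a + b) z \<le>
      (\<Sum>y\<in>UNIV. (\<Sum>j. poisson_weight a j * mpow P j z y) * (\<Sum>m. poisson_weight b m * survival m y))"
    unfolding cont_survival_eq using mpow_nonneg[OF stochastic] mpow_le_1[OF stochastic]
    by (intro suminf_poisson_weight_add_le[OF assms, where B = 1 and C = 1 and D = 1])
      (simp_all add: abs_survival_le_1 survival_add_le)
  also have "\<dots> = heat P a (cont_survival b) z"
    unfolding heat_eq_sum_mpow[OF stochastic assms(1)] cont_survival_eq ..
  finally show ?thesis .
qed

lemma cont_survival_antimono:
  assumes "0 \<le> v" and "v \<le> u"
  shows "cont_survival u z \<le> cont_survival v z"
proof -
  have "cont_survival ((u - v) + v) z \<le>
      (\<Sum>y\<in>{z}. (\<Sum>j. poisson_weight (u - v) j * 1) * (\<Sum>m. poisson_weight v m * survival m y))"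
    unfolding cont_survival_eq using assms
    by (intro suminf_poisson_weight_add_le[where B = 1 and C = 1 and D = 1])
      (simp_all add: abs_survival_le_1 survival_antimono)
  then show ?thesis
    by (simp add: suminf_poisson_weight cont_survival_eq)
qed

lemma l2_norm_cont_survival_le:
  assumes "v \<ge> 0"
  shows "l2_norm \<pi> (cont_survival v) \<le> exp (- v * gap * eps)"
proof -
  have "(l2_norm \<pi> (indicator (- A)))\<^sup>2 \<le> 1\<^sup>2"
    using eps_pos by (simp add: l2_norm_power2[OF weight_nonneg] l2_inner_indicator_compl)
  then have "l2_norm \<pi> (indicator (- A)) \<le> 1"
    by (rule power2_le_imp_le) simp
  then have "exp (- v * gap * eps) * l2_norm \<pi> (indicator (- A)) \<le> exp (- v * gap * eps)"
    by (simp add: mult_left_le)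
  moreover have "l2_norm \<pi> (cont_survival v) \<le> exp (- v * gap * eps) * l2_norm \<pi> (indicator (- A))"
    unfolding cont_survival_def using assms by (intro l2_norm_heat_killed_le) auto
  ultimately show ?thesis
    by linarith
qed

end

section \<open>Integrating a geometric tail\<close>

definition staircase :: "real \<Rightarrow> real \<Rightarrow> real \<Rightarrow> ennreal" where
  "staircase a D u = indicator {0..<a + D} u +
    (\<Sum>k. ennreal ((1/2) ^ k) * indicator {a + real (k + 1) * D ..< a + real (k + 2) * D} u)"

lemma nn_integral_staircase:
  assumes "a \<ge> 0" and "D > 0"
  shows "(\<integral>\<^sup>+ u. staircase a D u \<partial>lborel) = ennreal (a + 3 * D)"
proof -
  define step where "step k u = ennreal ((1/2) ^ k) *
      (indicator {a + real (k + 1) * D ..< a + real (k + 2) * D} u :: ennreal)" for k u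
  have step_measurable: "step k \<in> borel_measurable lborel" for k
    unfolding step_def by measurable
  have sum_measurable: "(\<lambda>u. \<Sum>k. step k u) \<in> borel_measurable borel"
    unfolding step_def by measurable
  have "(\<integral>\<^sup>+ u. step k u \<partial>lborel) = ennreal ((1/2) ^ k) * ennreal D" for k
    unfolding step_def using \<open>D > 0\<close>
    by (subst nn_integral_cmult_indicator) (auto simp: algebra_simps)
  then have "(\<integral>\<^sup>+ u. (\<Sum>k. step k u) \<partial>lborel) = (\<Sum>k. ennreal ((1/2) ^ k * D))"
    using \<open>D > 0\<close> by (simp add: nn_integral_suminf[OF step_measurable] ennreal_mult)
  also have "\<dots> = ennreal (2 * D)"
    using \<open>D > 0\<close> sums_mult2[OF geometric_sums[of "1/2 :: real"], of D]
    by (intro suminf_ennreal_eq) auto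
  finally have "(\<integral>\<^sup>+ u. (\<Sum>k. step k u) \<partial>lborel) = ennreal (2 * D)" .
  moreover have "(\<integral>\<^sup>+ u. indicator {0..<a + D} u \<partial>lborel) = ennreal (a + D)"
    using assms by simp
  ultimately show ?thesis
    unfolding staircase_def step_def[symmetric] using assms
    by (subst nn_integral_add)
      (use sum_measurable in \<open>auto simp: ennreal_plus[symmetric] simp del: ennreal_plus\<close>)
qed

lemma le_staircase:
  fixes f :: "real \<Rightarrow> real"
  assumes "a \<ge> 0" and "D > 0" and le_1: "\<And>u. 0 \<le> u \<Longrightarrow> f u \<le> 1"
    and tail: "\<And>k u. a + real (k + 1) * D \<le> u \<Longrightarrow> f u \<le> (1/2) ^ k"
  shows "indicator {0..} u * ennreal (f u) \<le> staircase a D u"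
proof (cases "0 \<le> u \<and> u < a + D")
  case True
  then show ?thesis
    using le_1[of u] by (simp add: staircase_def ennreal_leI[of _ 1, simplified] add_increasing2)
next
  case False
  show ?thesis
  proof (cases "u < 0")
    case False
    with \<open>\<not> (0 \<le> u \<and> u < a + D)\<close> have "(u - a) / D \<ge> 1"
      using \<open>D > 0\<close> by (simp add: field_simps)
    define k where "k = nat \<lfloor>(u - a) / D\<rfloor> - 1"
    have "real (k + 1) = of_int \<lfloor>(u - a) / D\<rfloor>"
      using \<open>(u - a) / D \<ge> 1\<close> by (simp add: k_def le_floor_iff of_nat_diff)
    moreover have "of_int \<lfloor>(u - a) / D\<rfloor> * D \<le> u - a"
      using mult_right_mono[OF of_int_floor_le[of "(u - a) / D"], of D] \<open>D > 0\<close> by simp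
    moreover have "u - a < (of_int \<lfloor>(u - a) / D\<rfloor> + 1) * D"
      using mult_strict_right_mono[OF real_of_int_floor_add_one_gt[of "(u - a) / D"] \<open>D > 0\<close>]
        \<open>D > 0\<close> by simp
    ultimately have lo: "a + real (k + 1) * D \<le> u" and hi: "u < a + real (k + 2) * D"
      by (simp_all add: algebra_simps)
    define step where "step j = ennreal ((1/2) ^ j) *
        (indicator {a + real (j + 1) * D ..< a + real (j + 2) * D} u :: ennreal)" for j
    have "indicator {0..} u * ennreal (f u) \<le> step k"
      using tail[OF lo] lo hi \<open>\<not> u < 0\<close> by (simp add: step_def ennreal_leI)
    also have "\<dots> = sum step {k}"
      by simp
    also have "\<dots> \<le> (\<Sum>j. step j)"
      by (rule sum_le_suminf) (auto intro: summableI)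
    also have "\<dots> \<le> staircase a D u"
      by (simp add: staircase_def step_def)
    finally show ?thesis .
  qed simp
qed

lemma nn_integral_geometric_tail_le:
  fixes f :: "real \<Rightarrow> real"
  assumes "a \<ge> 0" and "D > 0" and "\<And>u. 0 \<le> u \<Longrightarrow> f u \<le> 1"
    and "\<And>k u. a + real (k + 1) * D \<le> u \<Longrightarrow> f u \<le> (1/2) ^ k"
  shows "(\<integral>\<^sup>+ u. indicator {0..} u * ennreal (f u) \<partial>lborel) \<le> ennreal (a + 3 * D)"
proof -
  have "(\<integral>\<^sup>+ u. indicator {0..} u * ennreal (f u) \<partial>lborel) \<le> (\<integral>\<^sup>+ u. staircase a D u \<partial>lborel)"
    by (intro nn_integral_mono le_staircase[OF assms])
  then show ?thesis
    using nn_integral_staircase[OF assms(1,2)] by simp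
qed

section \<open>The good set\<close>

context reversible_chain
begin

lemma summable_power2_if_l2_norm_le:
  fixes g :: "nat \<Rightarrow> 'a \<Rightarrow> real"
  assumes bound: "\<And>n. (l2_norm \<pi> (g n))\<^sup>2 \<le> b n" and "summable b"
  shows "summable (\<lambda>n. (g n z)\<^sup>2)"
proof (rule summable_comparison_test)
  have "\<pi> z * (g n z)\<^sup>2 \<le> b n" for n
    using weight_mult_power2_le_l2_norm[OF weight_nonneg] bound order_trans by blast
  then show "\<exists>N. \<forall>n\<ge>N. norm ((g n z)\<^sup>2) \<le> b n / \<pi> z"
    using weight_pos by (simp add: pos_le_divide_eq mult.commute)
  show "summable (\<lambda>n. b n / \<pi> z)"
    using \<open>summable b\<close> by (rule summable_divide)
qed

text \<open>Chebyshev's inequality for the square function \<open>\<Sum>\<^sub>n g\<^sub>n\<^sup>2\<close>.\<close>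
lemma weight_square_sum_gt_1_le:
  fixes g :: "nat \<Rightarrow> 'a \<Rightarrow> real"
  assumes bound: "\<And>n. (l2_norm \<pi> (g n))\<^sup>2 \<le> b n" and "summable b"
  shows "(\<Sum>z | 1 < (\<Sum>n. (g n z)\<^sup>2). \<pi> z) \<le> (\<Sum>n. b n)"
proof -
  note summable = summable_power2_if_l2_norm_le[OF bound \<open>summable b\<close>]
  have "(\<Sum>z | 1 < (\<Sum>n. (g n z)\<^sup>2). \<pi> z) \<le> (\<Sum>z | 1 < (\<Sum>n. (g n z)\<^sup>2). \<pi> z * (\<Sum>n. (g n z)\<^sup>2))"
    using weight_nonneg by (intro sum_mono) (simp add: mult_le_cancel_left1 not_less)
  also have "\<dots> \<le> (\<Sum>z\<in>UNIV. \<pi> z * (\<Sum>n. (g n z)\<^sup>2))"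
    using weight_nonneg summable
    by (intro sum_mono2) (auto intro!: mult_nonneg_nonneg suminf_nonneg)
  also have "\<dots> = (\<Sum>n. \<Sum>z\<in>UNIV. \<pi> z * (g n z)\<^sup>2)"
    using summable by (simp add: suminf_mult[symmetric] suminf_sum summable_mult)
  also have "\<dots> = (\<Sum>n. (l2_norm \<pi> (g n))\<^sup>2)"
    unfolding l2_norm_power2[OF weight_nonneg] l2_inner_def
    by (simp add: power2_eq_square mult.assoc)
  also have "\<dots> \<le> (\<Sum>n. b n)"
  proof (rule suminf_le[OF bound _ \<open>summable b\<close>])
    show "summable (\<lambda>n. (l2_norm \<pi> (g n))\<^sup>2)"
      by (rule summable_comparison_test[OF _ \<open>summable b\<close>]) (simp add: bound)
  qed
  finally show ?thesis .
qed

end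

locale hitting_estimate = hitting_chain P \<pi> A
  for P :: "'a::finite \<Rightarrow> 'a \<Rightarrow> real" and \<pi> A +
  fixes t :: real
  assumes t_nonneg: "t \<ge> 0"
begin

definition horizon :: real where
  "horizon = (t + \<bar>ln eps\<bar>) * t_rel P"

definition period :: real where
  "period = t_rel P * ln 2 + 2 / eps * t_rel P * ln 2"

text \<open>\<open>horizon\<close> and \<open>period\<close> are \<open>r\<close> and \<open>\<ell> + s\<close> of the statement; \<open>deviation k\<close> is the error
  in \<open>cont_survival (horizon + k * period) \<le> mean \<pi> (cont_survival (k * period)) + deviation k\<close>.\<close>
definition deviation :: "nat \<Rightarrow> 'a \<Rightarrow> real" where
  "deviation k = heat P horizon (\<lambda>x. cont_survival (real k * period) x -
     mean \<pi> (cont_survival (real k * period)))"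

definition good :: "'a set" where
  "good = {z. (\<Sum>n. (2 ^ Suc n * deviation (Suc n) z)\<^sup>2) \<le> 1}"

lemma t_rel_eq: "t_rel P = 1 / gap"
  by (simp add: t_rel_def gap_def)

lemma horizon_nonneg: "horizon \<ge> 0"
  using t_nonneg gap_pos by (simp add: horizon_def t_rel_eq)

lemma period_pos: "period > 0"
  using gap_pos eps_pos by (simp add: period_def t_rel_eq add_pos_pos)

lemma exp_horizon_le: "exp (- horizon * gap) \<le> exp (- t)"
  using gap_pos by (simp add: horizon_def t_rel_eq)

lemma period_decay: "exp (- (real k * period) * gap * eps) \<le> (1/4) ^ k"
proof -
  have "exp (2 * ln (2 :: real)) = exp (ln 2) ^ 2"
    by (subst exp_of_nat_mult[symmetric]) simp
  then have quarter: "exp (- (2 * ln 2)) = (1/4 :: real)"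
    by (simp add: exp_minus)
  have "period * gap * eps = eps * ln 2 + 2 * ln 2"
    using gap_pos eps_pos by (simp add: period_def t_rel_eq field_simps)
  then have "real k * (2 * ln 2) \<le> real k * period * gap * eps"
    using eps_pos by (simp add: mult.assoc mult_left_mono)
  then have "exp (- (real k * period) * gap * eps) \<le> exp (real k * - (2 * ln 2))"
    by simp
  also have "\<dots> = (1/4) ^ k"
    by (simp only: exp_of_nat_mult quarter)
  finally show ?thesis .
qed

lemma l2_norm_deviation_le: "l2_norm \<pi> (deviation k) \<le> exp (- t) * (1/4) ^ k"
proof -
  define v where "v = real k * period"
  have "v \<ge> 0"
    using period_pos by (simp add: v_def)
  have "l2_norm \<pi> (deviation k) \<le>
      exp (- horizon * gap) * l2_norm \<pi> (\<lambda>x. cont_survival v x - mean \<pi> (cont_survival v))"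
    unfolding deviation_def v_def[symmetric]
    by (intro l2_norm_heat_mean_zero_le mean_centred horizon_nonneg)
  also have "\<dots> \<le> exp (- t) * exp (- v * gap * eps)"
    using exp_horizon_le order_trans[OF l2_norm_centred_le l2_norm_cont_survival_le[OF \<open>v \<ge> 0\<close>]]
    by (intro mult_mono) (simp_all add: l2_norm_nonneg)
  also have "\<dots> \<le> exp (- t) * (1/4) ^ k"
    using period_decay by (simp add: v_def)
  finally show ?thesis .
qed

lemma cont_survival_horizon_le:
  "cont_survival (horizon + real k * period) z \<le> (1/4) ^ k + deviation k z"
proof -
  define v where "v = real k * period"
  have "v \<ge> 0"
    using period_pos by (simp add: v_def)
  have "cont_survival (horizon + v) z \<le> heat P horizon (cont_survival v) z"
    using horizon_nonneg \<open>v \<ge> 0\<close> by (rule cont_survival_add_le)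
  also have "\<dots> = deviation k z + mean \<pi> (cont_survival v)"
    using heat_add_const[OF stochastic horizon_nonneg,
        of "\<lambda>x. cont_survival v x - mean \<pi> (cont_survival v)" "mean \<pi> (cont_survival v)"]
    by (simp add: deviation_def v_def)
  also have "mean \<pi> (cont_survival v) \<le> (1/4) ^ k"
    using order_trans[OF mean_le_l2_norm
        order_trans[OF l2_norm_cont_survival_le[OF \<open>v \<ge> 0\<close>] period_decay[of k, folded v_def]]] .
  finally show ?thesis
    by (simp add: v_def add.commute)
qed

lemma l2_norm_scaled_deviation_le:
  "(l2_norm \<pi> (\<lambda>z. 2 ^ Suc n * deviation (Suc n) z))\<^sup>2 \<le> exp (- 2 * t) * (1/4) ^ Suc n"
proof -
  have "(l2_norm \<pi> (\<lambda>z. 2 ^ Suc n * deviation (Suc n) z))\<^sup>2 =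
      4 ^ Suc n * (l2_norm \<pi> (deviation (Suc n)))\<^sup>2"
    unfolding l2_norm_power2[OF weight_nonneg] l2_inner_scale_left l2_inner_scale_right
    by (simp add: power_mult_distrib[symmetric])
  also have "\<dots> \<le> 4 ^ Suc n * (exp (- t) * (1/4) ^ Suc n)\<^sup>2"
    by (intro mult_left_mono power_mono l2_norm_deviation_le l2_norm_nonneg) simp_all
  also have "\<dots> = exp (- 2 * t) * (1/4) ^ Suc n"
    by (simp add: power_mult_distrib power2_eq_square mult_exp_exp power_divide)
  finally show ?thesis .
qed

lemma sums_quarter_powers: "(\<lambda>n. exp (- 2 * t) * (1/4) ^ Suc n) sums (exp (- 2 * t) / 3)"
  using sums_mult[OF geometric_sums[of "1/4 :: real"], of "exp (- 2 * t) / 4"] by simp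

lemma weight_good: "(\<Sum>z\<in>good. \<pi> z) \<ge> 1 - exp (- 2 * t) / 3"
proof -
  have "(\<Sum>z\<in>- good. \<pi> z) \<le> exp (- 2 * t) / 3"
    using weight_square_sum_gt_1_le[OF l2_norm_scaled_deviation_le
        sums_summable[OF sums_quarter_powers]] sums_unique[OF sums_quarter_powers]
    by (simp add: good_def Compl_eq not_le)
  moreover have "(\<Sum>z\<in>good. \<pi> z) + (\<Sum>z\<in>- good. \<pi> z) = 1"
    using sum.union_disjoint[of good "- good" \<pi>] weight_sum by (simp add: Un_commute)
  ultimately show ?thesis
    by linarith
qed

lemma abs_deviation_good:
  assumes "z \<in> good" and "k \<ge> 1"
  shows "\<bar>deviation k z\<bar> \<le> (1/2) ^ k"
proof -
  obtain n where k: "k = Suc n"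
    using \<open>k \<ge> 1\<close> by (metis Suc_le_D One_nat_def)
  have "(2 ^ k * deviation k z)\<^sup>2 \<le> (\<Sum>n. (2 ^ Suc n * deviation (Suc n) z)\<^sup>2)"
    unfolding k
    using summable_power2_if_l2_norm_le[OF l2_norm_scaled_deviation_le
        sums_summable[OF sums_quarter_powers]]
    by (rule sum_le_suminf[of _ "{n}", simplified]) simp
  also have "\<dots> \<le> 1"
    using assms(1) by (simp add: good_def)
  finally have "\<bar>2 ^ k * deviation k z\<bar> \<le> 1"
    by (simp add: abs_le_square_iff[of _ 1, simplified])
  then show ?thesis
    by (simp add: abs_mult power_divide field_simps)
qed

lemma cont_survival_good:
  assumes "z \<in> good" and "k \<ge> 1"
  shows "cont_survival (horizon + real k * period) z \<le> (1/4) ^ k + (1/2) ^ k"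
  using cont_survival_horizon_le[of k z] abs_deviation_good[OF assms] by simp

lemma exp_hit_time_good:
  assumes "z \<in> good"
  shows "exp_hit_time P A z \<le> ennreal (horizon + 3 * period)"
  unfolding exp_hit_time_def
proof (rule nn_integral_geometric_tail_le[OF horizon_nonneg period_pos])
  show "1 - cont_hit_prob P A z u \<le> 1" if "0 \<le> u" for u
    using cont_survival_le_1 that by (simp add: cont_hit_prob_eq)
  show "1 - cont_hit_prob P A z u \<le> (1/2) ^ k" if "horizon + real (k + 1) * period \<le> u" for k u
  proof -
    have "0 \<le> horizon + real (k + 1) * period"
      using horizon_nonneg period_pos by simp
    with that have "0 \<le> u"
      by linarith
    have "cont_survival u z \<le> cont_survival (horizon + real (k + 1) * period) z"
      using that horizon_nonneg period_pos by (intro cont_survival_antimono) auto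
    also have "\<dots> \<le> (1/4) ^ (k + 1) + (1/2) ^ (k + 1)"
      using assms by (rule cont_survival_good) simp
    also have "\<dots> \<le> (1/2) ^ k"
      using power_mono[of "1/4 :: real" "1/2" "k + 1"] by simp
    finally show ?thesis
      using \<open>0 \<le> u\<close> by (simp add: cont_hit_prob_eq)
  qed
qed

lemma cont_hit_prob_good:
  assumes "z \<in> good" and "i \<ge> 1"
  shows "cont_hit_prob P A z (horizon + real i * period) \<ge> (1 - 1 / 2 ^ i)\<^sup>2"
proof -
  define x :: real where "x = (1/2) ^ i"
  have "x \<le> 1/2" "0 \<le> x"
    using power_decreasing[of 1 i "1/2 :: real"] \<open>i \<ge> 1\<close> by (simp_all add: x_def)
  then have "(1 - x)\<^sup>2 \<le> 1 - (x\<^sup>2 + x)"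
    by (simp add: power2_eq_square algebra_simps) (simp add: mult_right_le_one_le)
  moreover have "cont_survival (horizon + real i * period) z \<le> x\<^sup>2 + x"
    using cont_survival_good[OF assms]
    by (simp add: x_def power_mult_distrib[symmetric] power2_eq_square)
  ultimately show ?thesis
    using horizon_nonneg period_pos
    by (simp add: x_def cont_hit_prob_eq power_divide)
qed

end

theorem lemma4p6:
  fixes P :: "'a::finite \<Rightarrow> 'a \<Rightarrow> real" and \<pi> :: "'a \<Rightarrow> real"
    and A :: "'a set" and t :: real
  assumes "stochastic P" and "irreducible_chain P"
    and "\<forall>x. \<pi> x > 0" and "(\<Sum>x\<in>UNIV. \<pi> x) = 1" and "reversible P \<pi>"
    and "CARD('a) \<ge> 2"
    and "A \<noteq> {}" and "t \<ge> 1"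
  shows "let \<epsilon> = (\<Sum>x\<in>A. \<pi> x);
             r = (t + \<bar>ln \<epsilon>\<bar>) * t_rel P;
             l = t_rel P * ln 2;
             s = 2 / \<epsilon> * t_rel P * ln 2
         in \<exists>J :: 'a set.
              (\<Sum>x\<in>J. \<pi> x) \<ge> 1 - 3/4 * exp (- 2 * t)
            \<and> (\<forall>z\<in>J. exp_hit_time P A z \<le> ennreal (r + 11/2 * (s + l)))
            \<and> (\<forall>z\<in>J. \<forall>i::nat. i \<ge> 1 \<longrightarrow>
                  cont_hit_prob P A z (r + real i * (l + s)) \<ge> (1 - 1 / 2 ^ i)\<^sup>2)"
proof -
  interpret hitting_estimate P \<pi> A t
    by unfold_locales (use assms in auto)
  have "(\<Sum>x\<in>good. \<pi> x) \<ge> 1 - 3/4 * exp (- 2 * t)"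
    using weight_good exp_ge_zero[of "- 2 * t"] by linarith
  moreover have "exp_hit_time P A z \<le> ennreal (horizon + 11/2 * period)" if "z \<in> good" for z
    using period_pos by (intro order_trans[OF exp_hit_time_good[OF that]] ennreal_leI) simp
  moreover have "cont_hit_prob P A z (horizon + real i * period) \<ge> (1 - 1 / 2 ^ i)\<^sup>2"
    if "z \<in> good" and "i \<ge> 1" for z i
    using cont_hit_prob_good[OF that] .
  ultimately show ?thesis
    unfolding horizon_def period_def eps_def Let_def by (auto simp: add.commute)
qed

end
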